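(* Let $G$ be a mirror graph, $v$ a vertex with neighbours $v_1,\dots,v_k$, and $A\le \mathrm{Aut}(G)$ the subgroup generated by all mirror automorphisms. For $i\ne j$ let $k_{ij}$ be the order of $\alpha_{vv_i}\alpha_{vv_j}$ (half the length of the unique convex cycle through $vv_i$ and $vv_j$), and $k_{ii}=1$. Then $$A\cong\langle \alpha_{vv_1},\dots,\alpha_{vv_k}\mid (\alpha_{vv_i}\alpha_{vv_j})^{k_{ij}}=1\ \ (1\le i,j\le k)\rangle,$$ so $A$ is a finite Coxeter group and $G\cong\mathrm{Cay}(A,\{\alpha_{vv_1},\dots,\alpha_{vv_k}\})$.
   Context: A mirror graph is a finite connected simple graph $G$ admitting a partition $\{E_1,\dots,E_k\}$ of its edges such that for every $i$ there is an automorphism $\alpha_i$ swapping the endpoints of every edge of $E_i$, with $G-E_i$ having exactly two components that $\alpha_i$ maps isomorphically onto each other. Mirror graphs are partial cubes whose mirror partition is the partition into $\Theta$-classes ($ab\,\Theta\,xy$ iff $d(a,x)+d(b,y)\neq d(a,y)+d(b,x)$). For an edge $xy$, the mirror automorphism $\alpha_{xy}$ is the unique automorphism swapping the endpoints of every edge $\Theta$-equivalent to $xy$. A cycle is convex if every shortest path between two of its vertices lies on it. $\mathrm{Cay}(A,S)$ has vertex set $A$, with $\beta_1,\beta_2$ adjacent iff $\beta_1=s\beta_2$ for some $s\in S$. *)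

theory Defs
  imports "HOL-Algebra.Algebra"
begin

definition simple_graph :: "'a set \<Rightarrow> ('a \<Rightarrow> 'a \<Rightarrow> bool) \<Rightarrow> bool" where
  "simple_graph V E \<longleftrightarrow> finite V \<and> (\<forall>x y. E x y \<longrightarrow> x \<in> V \<and> y \<in> V)
     \<and> (\<forall>x y. E x y \<longrightarrow> E y x) \<and> (\<forall>x. \<not> E x x)"

fun walk :: "('a \<Rightarrow> 'a \<Rightarrow> bool) \<Rightarrow> 'a list \<Rightarrow> bool" where
  "walk E [] = False"
| "walk E [x] = True"
| "walk E (x # y # xs) = (E x y \<and> walk E (y # xs))"

definition reach :: "'a set \<Rightarrow> ('a \<Rightarrow> 'a \<Rightarrow> bool) \<Rightarrow> 'a \<Rightarrow> 'a \<Rightarrow> bool" where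
  "reach V E x y \<longleftrightarrow> (\<exists>p. walk E p \<and> set p \<subseteq> V \<and> hd p = x \<and> last p = y)"

definition connected_graph :: "'a set \<Rightarrow> ('a \<Rightarrow> 'a \<Rightarrow> bool) \<Rightarrow> bool" where
  "connected_graph V E \<longleftrightarrow> V \<noteq> {} \<and> (\<forall>x\<in>V. \<forall>y\<in>V. reach V E x y)"

definition gdist :: "'a set \<Rightarrow> ('a \<Rightarrow> 'a \<Rightarrow> bool) \<Rightarrow> 'a \<Rightarrow> 'a \<Rightarrow> nat" where
  "gdist V E x y = (LEAST n. \<exists>p. walk E p \<and> set p \<subseteq> V \<and> hd p = x \<and> last p = y
                                 \<and> length p = Suc n)"

definition edges :: "('a \<Rightarrow> 'a \<Rightarrow> bool) \<Rightarrow> 'a set set" where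
  "edges E = {{x, y} | x y. E x y}"

definition del_edges :: "('a \<Rightarrow> 'a \<Rightarrow> bool) \<Rightarrow> 'a set set \<Rightarrow> 'a \<Rightarrow> 'a \<Rightarrow> bool" where
  "del_edges E F = (\<lambda>x y. E x y \<and> {x, y} \<notin> F)"

definition components :: "'a set \<Rightarrow> ('a \<Rightarrow> 'a \<Rightarrow> bool) \<Rightarrow> 'a set set" where
  "components V E = {{y \<in> V. reach V E x y} | x. x \<in> V}"

definition graph_aut :: "'a set \<Rightarrow> ('a \<Rightarrow> 'a \<Rightarrow> bool) \<Rightarrow> ('a \<Rightarrow> 'a) \<Rightarrow> bool" where
  "graph_aut V E f \<longleftrightarrow> bij_betw f V V \<and> (\<forall>x\<in>V. \<forall>y\<in>V. E x y \<longleftrightarrow> E (f x) (f y))"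

definition mirror_graph :: "'a set \<Rightarrow> ('a \<Rightarrow> 'a \<Rightarrow> bool) \<Rightarrow> bool" where
  "mirror_graph V E \<longleftrightarrow> simple_graph V E \<and> connected_graph V E \<and>
    (\<exists>P. {} \<notin> P \<and> \<Union>P = edges E \<and> (\<forall>F1\<in>P. \<forall>F2\<in>P. F1 \<noteq> F2 \<longrightarrow> F1 \<inter> F2 = {}) \<and>
       (\<forall>Ei\<in>P. \<exists>\<alpha>. graph_aut V E \<alpha>
           \<and> (\<forall>x y. E x y \<and> {x, y} \<in> Ei \<longrightarrow> \<alpha> x = y \<and> \<alpha> y = x)
           \<and> (\<exists>C1 C2. components V (del_edges E Ei) = {C1, C2} \<and> C1 \<noteq> C2 \<and> \<alpha> ` C1 = C2)))"

definition theta :: "'a set \<Rightarrow> ('a \<Rightarrow> 'a \<Rightarrow> bool) \<Rightarrow> 'a \<Rightarrow> 'a \<Rightarrow> 'a \<Rightarrow> 'a \<Rightarrow> bool" where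
  "theta V E a b x y \<longleftrightarrow> gdist V E a x + gdist V E b y \<noteq> gdist V E a y + gdist V E b x"

text \<open>The mirror automorphism of the edge xy (as an element of the symmetric group
  BijGroup V, i.e. extensional on V): the unique automorphism swapping the endpoints
  of every edge Theta-equivalent to xy.\<close>
definition mirror_aut :: "'a set \<Rightarrow> ('a \<Rightarrow> 'a \<Rightarrow> bool) \<Rightarrow> 'a \<Rightarrow> 'a \<Rightarrow> ('a \<Rightarrow> 'a)" where
  "mirror_aut V E x y = (THE f. f \<in> extensional V \<and> graph_aut V E f \<and>
      (\<forall>a b. E a b \<and> theta V E a b x y \<longrightarrow> f a = b \<and> f b = a))"

definition mirror_auts :: "'a set \<Rightarrow> ('a \<Rightarrow> 'a \<Rightarrow> bool) \<Rightarrow> ('a \<Rightarrow> 'a) set" where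
  "mirror_auts V E = {mirror_aut V E x y | x y. E x y}"

definition mirror_group :: "'a set \<Rightarrow> ('a \<Rightarrow> 'a \<Rightarrow> bool) \<Rightarrow> ('a \<Rightarrow> 'a) monoid" where
  "mirror_group V E = subgroup_generated (BijGroup V) (mirror_auts V E)"

definition cayley_adj :: "('g, 'b) monoid_scheme \<Rightarrow> 'g set \<Rightarrow> 'g \<Rightarrow> 'g \<Rightarrow> bool" where
  "cayley_adj A S b1 b2 \<longleftrightarrow> b1 \<in> carrier A \<and> b2 \<in> carrier A \<and> (\<exists>s\<in>S. b1 = s \<otimes>\<^bsub>A\<^esub> b2)"

text \<open>Words are lists over the generator indices 0..k-1; two words are equivalent
  iff they are related by the equivalence closure of inserting/deleting relators
  (s_i s_j)^(m i j) as subwords.  The presented group is the quotient monoid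
  (which is the group defined by the presentation, since every relator set here
  contains s_i^2 when m i i = 1).\<close>

definition words :: "nat \<Rightarrow> nat list set" where
  "words k = {w. set w \<subseteq> {..<k}}"

inductive cox_eq :: "(nat \<Rightarrow> nat \<Rightarrow> nat) \<Rightarrow> nat \<Rightarrow> nat list \<Rightarrow> nat list \<Rightarrow> bool"
  for m k where
  refl: "w \<in> words k \<Longrightarrow> cox_eq m k w w"
| sym: "cox_eq m k u w \<Longrightarrow> cox_eq m k w u"
| trans: "cox_eq m k u v \<Longrightarrow> cox_eq m k v w \<Longrightarrow> cox_eq m k u w"
| rel: "u \<in> words k \<Longrightarrow> v \<in> words k \<Longrightarrow> i < k \<Longrightarrow> j < k \<Longrightarrow>
        cox_eq m k (u @ concat (replicate (m i j) [i, j]) @ v) (u @ v)"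

definition cox_rel :: "(nat \<Rightarrow> nat \<Rightarrow> nat) \<Rightarrow> nat \<Rightarrow> (nat list \<times> nat list) set" where
  "cox_rel m k = {(u, w). cox_eq m k u w}"

definition presented_group :: "(nat \<Rightarrow> nat \<Rightarrow> nat) \<Rightarrow> nat \<Rightarrow> nat list set monoid" where
  "presented_group m k =
    \<lparr>carrier = words k // cox_rel m k,
     monoid.mult = (\<lambda>U W. \<Union>x\<in>U. \<Union>y\<in>W. cox_rel m k `` {x @ y}),
     one = cox_rel m k `` {[]}\<rparr>"

definition gen_class :: "(nat \<Rightarrow> nat \<Rightarrow> nat) \<Rightarrow> nat \<Rightarrow> nat \<Rightarrow> nat list set" where
  "gen_class m k i = cox_rel m k `` {[i]}"

end

theory Submission
  imports Defs
begin

(* The mirror classes of a mirror graph are its Theta-classes: the mirror of a class F swaps the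
   two halves of G - F, which forces the distance from any vertex to grow by exactly one across
   every edge of F leaving that vertex's half. An automorphism flipping all edges of one class is
   unique (it is pinned down by the distances to one half), so the mirror of the edge (g x, g y)
   is g \<alpha>\<^sub>x\<^sub>y g\<^sup>-\<^sup>1 and the mirror group is generated by the mirrors \<alpha>\<^sub>i of the edges at v.
   Words in the \<alpha>\<^sub>i trace walks from v. Following on which side of a class the vertices of such
   a walk lie shows that a word fixing v acts trivially (so the group acts simply transitively
   and G is its Cayley graph) and yields the exchange condition for reduced (geodesic) words.
   The Matsumoto-Tits argument then relates reduced words for the same vertex by the braid
   relations, and every word reduces modulo \<alpha>\<^sub>i\<^sup>2 = 1; hence the Coxeter presentation maps
   isomorphically onto the mirror group. *)

lemma walk_nonempty: "walk E p \<Longrightarrow> p \<noteq> []"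
  by (cases p) auto

lemma walk_Cons_nonempty: "p \<noteq> [] \<Longrightarrow> walk E (x # p) \<longleftrightarrow> E x (hd p) \<and> walk E p"
  by (cases p) auto

lemma walk_append: "walk E p \<Longrightarrow> walk E q \<Longrightarrow> E (last p) (hd q) \<Longrightarrow> walk E (p @ q)"
proof (induction E p rule: walk.induct)
  case (2 E x)
  then show ?case by (cases q) auto
qed auto

lemma walk_appendD:
  "walk E (p @ q) \<Longrightarrow> p \<noteq> [] \<Longrightarrow> q \<noteq> [] \<Longrightarrow> walk E p \<and> walk E q \<and> E (last p) (hd q)"
proof (induction p)
  case (Cons a p)
  then show ?case by (cases "p = []") (auto simp: walk_Cons_nonempty)
qed simp

lemma walk_middle_edge: "walk E (p1 @ u # w # p2) \<Longrightarrow> E u w"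
  using walk_appendD[of E "p1 @ [u]" "w # p2"] by simp

lemma walk_rev: "(\<And>x y. E x y \<Longrightarrow> E y x) \<Longrightarrow> walk E p \<Longrightarrow> walk E (rev p)"
proof (induction E p rule: walk.induct)
  case (3 E x y xs)
  then show ?case using walk_append[of E "rev (y # xs)" "[x]"] by simp
qed auto

lemma walk_map:
  "walk E p \<Longrightarrow> (\<forall>x\<in>set p. \<forall>y\<in>set p. E x y \<longrightarrow> E' (f x) (f y)) \<Longrightarrow> walk E' (map f p)"
proof (induction E p rule: walk.induct)
  case (3 E x y xs)
  then have "walk E' (map f (y # xs))" by (intro "3.IH") auto
  then show ?case using 3 by simp
qed auto

lemma walk_restrict: "walk E p \<Longrightarrow> set p \<subseteq> S \<Longrightarrow> walk (\<lambda>x y. E x y \<and> x \<in> S \<and> y \<in> S) p"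
proof (induction E p rule: walk.induct)
  case (3 E x y xs)
  then show ?case by simp
qed auto

lemma walk_preserves: "walk R p \<Longrightarrow> (\<forall>u w. R u w \<longrightarrow> (Q u \<longleftrightarrow> Q w)) \<Longrightarrow> Q (hd p) \<longleftrightarrow> Q (last p)"
proof (induction R p rule: walk.induct)
  case (3 R x y xs)
  have "walk R (y # xs)" "R x y" using "3.prems"(1) by simp_all
  then have "Q y \<longleftrightarrow> Q (last (y # xs))" using "3.IH" "3.prems"(2) by simp
  moreover have "Q x \<longleftrightarrow> Q y" using \<open>R x y\<close> "3.prems"(2) by blast
  ultimately show ?case by simp
qed simp_all

lemma walk_leaves:
  "walk E p \<Longrightarrow> Q (hd p) \<Longrightarrow> \<not> Q (last p) \<Longrightarrow> \<exists>p1 u w p2. p = p1 @ u # w # p2 \<and> Q u \<and> \<not> Q w"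
proof (induction E p rule: walk.induct)
  case (3 E x y xs)
  show ?case
  proof (cases "Q y")
    case True
    then obtain p1 u w p2 where "y # xs = p1 @ u # w # p2" "Q u" "\<not> Q w"
      using 3 by auto
    then show ?thesis by (intro exI[of _ "x # p1"]) simp
  next
    case False
    then show ?thesis using 3 by (intro exI[of _ "[]"]) simp
  qed
qed auto

lemma exists_flip_index:
  "a \<le> n \<Longrightarrow> (f :: nat \<Rightarrow> bool) a \<noteq> f n \<Longrightarrow> \<exists>j. a \<le> j \<and> j < n \<and> f j \<noteq> f (Suc j)"
proof (induction n)
  case (Suc n)
  show ?case
  proof (cases "a = Suc n")
    case False
    then have "a \<le> n" using Suc.prems by simp
    then show ?thesis using Suc by (cases "f n = f (Suc n)") (auto intro: less_SucI)
  qed (use Suc.prems in simp)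
qed simp

lemma reach_refl: "x \<in> V \<Longrightarrow> reach V R x x"
  unfolding reach_def by (intro exI[of _ "[x]"]) auto

lemma reach_edge: "R x y \<Longrightarrow> x \<in> V \<Longrightarrow> y \<in> V \<Longrightarrow> reach V R x y"
  unfolding reach_def by (intro exI[of _ "[x, y]"]) auto

lemma reach_sym:
  assumes "\<And>x y. R x y \<Longrightarrow> R y x" and "reach V R x y"
  shows "reach V R y x"
proof -
  obtain p where p: "walk R p" "set p \<subseteq> V" "hd p = x" "last p = y"
    using assms(2) unfolding reach_def by blast
  then have "walk R (rev p) \<and> set (rev p) \<subseteq> V \<and> hd (rev p) = y \<and> last (rev p) = x"
    using walk_rev[of R p, OF assms(1)] walk_nonempty by (simp add: hd_rev last_rev)
  then show ?thesis unfolding reach_def by blast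
qed

lemma reach_trans: "reach V R x y \<Longrightarrow> reach V R y z \<Longrightarrow> reach V R x z"
proof -
  assume "reach V R x y" "reach V R y z"
  then obtain p q where p: "walk R p" "set p \<subseteq> V" "hd p = x" "last p = y"
    and q: "walk R q" "set q \<subseteq> V" "hd q = y" "last q = z" unfolding reach_def by blast
  have pne: "p \<noteq> []" and qne: "q \<noteq> []" using p q walk_nonempty by auto
  show ?thesis
  proof (cases "tl q = []")
    case True
    then have "q = [y]" using qne q by (cases q) auto
    then show ?thesis using p q unfolding reach_def by auto
  next
    case False
    have "walk R (tl q)" using q qne False by (cases q) (auto simp: walk_Cons_nonempty)
    moreover have "R y (hd (tl q))" using q qne False by (cases q) (auto simp: walk_Cons_nonempty)
    ultimately have "walk R (p @ tl q)" using p walk_append by metis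
    moreover have "set (tl q) \<subseteq> V" using q qne by (cases q) auto
    moreover have "last (p @ tl q) = z" using False q qne by (cases q) auto
    moreover have "hd (p @ tl q) = x" using pne p by simp
    moreover have "set (p @ tl q) \<subseteq> V" using p \<open>set (tl q) \<subseteq> V\<close> by simp
    ultimately show ?thesis unfolding reach_def by blast
  qed
qed

lemma reach_walk_vertex: "walk R p \<Longrightarrow> set p \<subseteq> V \<Longrightarrow> z \<in> set p \<Longrightarrow> reach V R (hd p) z"
proof (induction R p rule: walk.induct)
  case (3 R x y xs)
  then show ?case
    using reach_refl[of x V R] reach_edge[of R x y V] reach_trans by (cases "z = x") auto
qed (auto intro: reach_refl)

lemma components_nonempty: "C \<in> components V R \<Longrightarrow> C \<noteq> {}"
  unfolding components_def by (auto intro: reach_refl)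

lemma components_subset: "C \<in> components V R \<Longrightarrow> C \<subseteq> V"
  unfolding components_def by auto

lemma components_cover: "x \<in> V \<Longrightarrow> \<exists>C\<in>components V R. x \<in> C"
  unfolding components_def
  by (rule bexI[of _ "{y \<in> V. reach V R x y}"]) (auto intro: reach_refl)

context
  fixes V :: "'a set" and R :: "'a \<Rightarrow> 'a \<Rightarrow> bool"
  assumes R_sym: "\<And>x y. R x y \<Longrightarrow> R y x" and R_in_V: "\<And>x y. R x y \<Longrightarrow> x \<in> V \<and> y \<in> V"
begin

lemma component_eq_reach:
  assumes "C \<in> components V R" "x \<in> C"
  shows "C = {y \<in> V. reach V R x y}"
proof -
  obtain z where z: "z \<in> V" "C = {y \<in> V. reach V R z y}"
    using assms(1) unfolding components_def by blast
  then have "reach V R z x" using assms(2) by blast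
  then have "reach V R x y \<longleftrightarrow> reach V R z y" for y
    using reach_trans reach_sym[of R, OF R_sym] by metis
  then show ?thesis using z by blast
qed

lemma component_closed: "C \<in> components V R \<Longrightarrow> x \<in> C \<Longrightarrow> R x y \<Longrightarrow> y \<in> C"
  using component_eq_reach[of C x] R_in_V reach_edge[of R x y V] reach_trans by blast

lemma component_walk:
  assumes "C \<in> components V R" "x \<in> C" "y \<in> C"
  shows "\<exists>p. walk R p \<and> set p \<subseteq> C \<and> hd p = x \<and> last p = y"
proof -
  have C: "C = {y \<in> V. reach V R x y}" using component_eq_reach assms by blast
  then obtain p where p: "walk R p" "set p \<subseteq> V" "hd p = x" "last p = y"
    using assms(3) unfolding reach_def by blast
  then have "set p \<subseteq> C" using reach_walk_vertex[OF p(1,2)] C by blast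
  then show ?thesis using p by blast
qed

lemma components_disjoint:
  assumes "C \<in> components V R" "C' \<in> components V R" "C \<noteq> C'"
  shows "C \<inter> C' = {}"
proof (rule ccontr)
  assume "C \<inter> C' \<noteq> {}"
  then obtain z where "z \<in> C" "z \<in> C'" by blast
  then have "C = {y \<in> V. reach V R z y}" "C' = {y \<in> V. reach V R z y}"
    using component_eq_reach assms(1,2) by blast+
  then show False using assms(3) by simp
qed

lemma two_components:
  assumes "components V R = {C1, C2}" "C1 \<noteq> C2"
  shows "C1 \<union> C2 = V" "C1 \<inter> C2 = {}" "C1 \<noteq> {}" "C2 \<noteq> {}"
proof -
  have C: "C1 \<in> components V R" "C2 \<in> components V R" using assms(1) by auto
  then show "C1 \<inter> C2 = {}" using components_disjoint assms(2) by blast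
  have "x \<in> C1 \<union> C2" if "x \<in> V" for x using components_cover[OF that] assms(1) by auto
  then show "C1 \<union> C2 = V" using components_subset[OF C(1)] components_subset[OF C(2)] by blast
  show "C1 \<noteq> {}" "C2 \<noteq> {}" using components_nonempty C by blast+
qed

end

lemma bij_betw_swap_complement:
  assumes "bij_betw f V V" "A \<union> B = V" "A \<inter> B = {}" "f ` A = B"
  shows "f ` B = A"
proof -
  have "B = V - A" "A \<subseteq> V" using assms(2,3) by blast+
  then have "f ` B = f ` V - f ` A"
    using inj_on_image_set_diff[of f V V A] assms(1) by (simp add: bij_betw_def)
  then show ?thesis using assms by (auto simp: bij_betw_def)
qed

locale connected_simple_graph =
  fixes V :: "'a set" and E :: "'a \<Rightarrow> 'a \<Rightarrow> bool"
  assumes simple: "simple_graph V E" and connected: "connected_graph V E"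
begin

lemma finite_V: "finite V" using simple unfolding simple_graph_def by blast
lemma adj_in_V: "E x y \<Longrightarrow> x \<in> V \<and> y \<in> V" using simple unfolding simple_graph_def by blast
lemma adj_sym: "E x y \<Longrightarrow> E y x" using simple unfolding simple_graph_def by blast
lemma adj_irrefl: "\<not> E x x" using simple unfolding simple_graph_def by blast

abbreviation d where "d \<equiv> gdist V E"

definition walk_betw where "walk_betw p x y n \<longleftrightarrow> walk E p \<and> set p \<subseteq> V \<and> hd p = x \<and> last p = y \<and> length p = Suc n"

lemma dist_le_walk: "walk_betw p x y n \<Longrightarrow> d x y \<le> n"
  unfolding gdist_def walk_betw_def by (rule Least_le) blast

lemma dist_walk: assumes "x \<in> V" "y \<in> V" shows "\<exists>p. walk_betw p x y (d x y)"
proof -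
  obtain p where p: "walk E p" "set p \<subseteq> V" "hd p = x" "last p = y"
    using connected assms unfolding connected_graph_def reach_def by blast
  then have "length p = Suc (length p - 1)" using walk_nonempty by fastforce
  then have ex: "\<exists>n p. walk E p \<and> set p \<subseteq> V \<and> hd p = x \<and> last p = y \<and> length p = Suc n"
    using p by blast
  show ?thesis unfolding walk_betw_def gdist_def by (rule LeastI_ex[OF ex])
qed

lemma dist_self: "x \<in> V \<Longrightarrow> d x x = 0"
  using dist_le_walk[of "[x]" x x 0] by (simp add: walk_betw_def)

lemma dist_eq_0: assumes "x \<in> V" "y \<in> V" "d x y = 0" shows "x = y"
proof -
  obtain p where "walk_betw p x y 0" using dist_walk[OF assms(1,2)] assms(3) by metis
  then show ?thesis unfolding walk_betw_def by (cases p) auto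
qed

lemma dist_adj: assumes "E x y" shows "d x y = 1"
proof -
  have "walk_betw [x, y] x y 1" using assms adj_in_V unfolding walk_betw_def by simp
  then have "d x y \<le> 1" by (rule dist_le_walk)
  moreover have "d x y \<noteq> 0" using dist_eq_0 assms adj_in_V adj_irrefl by metis
  ultimately show ?thesis by simp
qed

lemma walk_betw_append: assumes "walk_betw p x y n" "walk_betw q y z m" shows "walk_betw (p @ tl q) x z (n + m)"
proof -
  have pne: "p \<noteq> []" and qne: "q \<noteq> []" using assms unfolding walk_betw_def by auto
  show ?thesis
  proof (cases "tl q = []")
    case True
    then have "q = [y]" using qne assms unfolding walk_betw_def by (cases q) auto
    then show ?thesis using assms unfolding walk_betw_def by auto
  next
    case False
    have w: "walk E (tl q)" "E y (hd (tl q))" using assms qne False unfolding walk_betw_def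
      by (cases q; auto simp: walk_Cons_nonempty)+
    then have "walk E (p @ tl q)" using assms walk_append unfolding walk_betw_def by metis
    moreover have "set (tl q) \<subseteq> V" using assms qne unfolding walk_betw_def by (cases q) auto
    moreover have "last (p @ tl q) = z" using False assms qne unfolding walk_betw_def by (cases q) auto
    moreover have "hd (p @ tl q) = x" using pne assms unfolding walk_betw_def by simp
    moreover have "length (p @ tl q) = Suc (n + m)" using assms unfolding walk_betw_def by simp
    ultimately show ?thesis using assms unfolding walk_betw_def by simp
  qed
qed

lemma dist_triangle: assumes "x \<in> V" "y \<in> V" "z \<in> V" shows "d x z \<le> d x y + d y z"
proof -
  obtain p where "walk_betw p x y (d x y)" using dist_walk[OF assms(1,2)] by blast
  moreover obtain q where "walk_betw q y z (d y z)" using dist_walk[OF assms(2,3)] by blast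
  ultimately
  have "walk_betw (p @ tl q) x z (d x y + d y z)" by (rule walk_betw_append)
  then show ?thesis by (rule dist_le_walk)
qed

lemma walk_betw_rev: "walk_betw p x y n \<Longrightarrow> walk_betw (rev p) y x n"
  unfolding walk_betw_def using walk_rev[of E p] adj_sym walk_nonempty
  by (auto simp: hd_rev last_rev)

lemma dist_sym: assumes "x \<in> V" "y \<in> V" shows "d x y = d y x"
proof -
  have "d y x \<le> d x y" if xy: "x \<in> V" "y \<in> V" for x y
  proof -
    obtain p where "walk_betw p x y (d x y)" using dist_walk[OF xy] by blast
    then show ?thesis using walk_betw_rev dist_le_walk by metis
  qed
  then show ?thesis using assms by (meson antisym)
qed

lemma dist_split_walk: assumes "walk_betw (p1 @ u # w # p2) x y n" shows "d x u + d w y + 1 \<le> n"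
proof -
  have W: "walk E ((p1 @ [u]) @ (w # p2))" using assms unfolding walk_betw_def by simp
  then have w1: "walk E (p1 @ [u])" and w2: "walk E (w # p2)"
    using walk_appendD[OF W] by auto
  have "walk_betw (p1 @ [u]) x u (length p1)" using w1 assms unfolding walk_betw_def by (cases p1) auto
  moreover have "walk_betw (w # p2) w y (length p2)" using w2 assms unfolding walk_betw_def by (cases p2) auto
  ultimately have "d x u \<le> length p1" "d w y \<le> length p2" using dist_le_walk by auto
  moreover have "n = length p1 + length p2 + 1" using assms unfolding walk_betw_def by simp
  ultimately show ?thesis by simp
qed

lemma dist_Suc_neighbour: assumes "v \<in> V" "u \<in> V" "d v u = Suc n" shows "\<exists>x. E x u \<and> d v x = n"
proof -
  obtain p where p: "walk_betw p v u (Suc n)" using dist_walk[OF assms(1,2)] assms(3) by metis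
  then have len: "length p = Suc (Suc n)" unfolding walk_betw_def by simp
  then have bne: "butlast p \<noteq> []" by (cases p) auto
  have pe: "p = butlast p @ [u]" using p len unfolding walk_betw_def
    by (metis append_butlast_last_id list.size(3) nat.distinct(1))
  have W: "walk E (butlast p @ [u])" using p pe unfolding walk_betw_def by metis
  then have wb: "walk E (butlast p)" and ex: "E (last (butlast p)) u"
    using walk_appendD[OF W bne] by auto
  have "hd (butlast p) = v" using p bne pe unfolding walk_betw_def by (metis hd_append2)
  then have "walk_betw (butlast p) v (last (butlast p)) n"
    using wb p len unfolding walk_betw_def by (auto dest: in_set_butlastD)
  then have le: "d v (last (butlast p)) \<le> n" by (rule dist_le_walk)
  have "d v u \<le> d v (last (butlast p)) + d (last (butlast p)) u"
    using dist_triangle assms adj_in_V[OF ex] by blast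
  then have "d v (last (butlast p)) \<ge> n" using dist_adj[OF ex] assms by simp
  then show ?thesis using le ex by (intro exI[of _ "last (butlast p)"]) simp
qed

lemma dist_adj_le: assumes "E x y" "a \<in> V" shows "d a y \<le> Suc (d a x)"
  using dist_triangle[of a x y] dist_adj[OF assms(1)] adj_in_V[OF assms(1)] assms by simp

lemma aut_bij: "graph_aut V E f \<Longrightarrow> bij_betw f V V" unfolding graph_aut_def by blast
lemma aut_in_V: "graph_aut V E f \<Longrightarrow> x \<in> V \<Longrightarrow> f x \<in> V"
  unfolding graph_aut_def by (meson bij_betwE)
lemma aut_adj: "graph_aut V E f \<Longrightarrow> E x y \<Longrightarrow> E (f x) (f y)"
  unfolding graph_aut_def using adj_in_V by blast
lemma aut_adj_iff: "graph_aut V E f \<Longrightarrow> x \<in> V \<Longrightarrow> y \<in> V \<Longrightarrow> E (f x) (f y) \<longleftrightarrow> E x y"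
  unfolding graph_aut_def by blast
lemma aut_inj: "graph_aut V E f \<Longrightarrow> x \<in> V \<Longrightarrow> y \<in> V \<Longrightarrow> f x = f y \<Longrightarrow> x = y"
  unfolding graph_aut_def bij_betw_def inj_on_def by blast

lemma aut_inv_into_left: "graph_aut V E f \<Longrightarrow> x \<in> V \<Longrightarrow> inv_into V f (f x) = x"
  using aut_bij bij_betw_inv_into_left by metis
lemma aut_inv_into_right: "graph_aut V E f \<Longrightarrow> x \<in> V \<Longrightarrow> f (inv_into V f x) = x"
  using aut_bij bij_betw_inv_into_right by metis
lemma aut_inv_into_in_V: "graph_aut V E f \<Longrightarrow> x \<in> V \<Longrightarrow> inv_into V f x \<in> V"
  using aut_bij bij_betw_inv_into bij_betwE by metis

lemma dist_aut_le: assumes "graph_aut V E f" "x \<in> V" "y \<in> V" shows "d (f x) (f y) \<le> d x y"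
proof -
  obtain p where p: "walk_betw p x y (d x y)" using dist_walk[OF assms(2,3)] by blast
  have "walk E (map f p)" using p unfolding walk_betw_def
    by (intro walk_map) (auto intro: aut_adj[OF assms(1)])
  moreover have "set (map f p) \<subseteq> V" using p aut_in_V[OF assms(1)] unfolding walk_betw_def by auto
  moreover have "p \<noteq> []" using p unfolding walk_betw_def by auto
  ultimately have "walk_betw (map f p) (f x) (f y) (d x y)" using p unfolding walk_betw_def
    by (simp add: hd_map last_map)
  then show ?thesis by (rule dist_le_walk)
qed

lemma aut_id: "graph_aut V E id"
  unfolding graph_aut_def by simp

lemma aut_cong: assumes "graph_aut V E f" "\<And>z. z \<in> V \<Longrightarrow> f z = f' z" shows "graph_aut V E f'"
proof -
  have "bij_betw f' V V" using assms bij_betw_cong[of V f f' V] unfolding graph_aut_def by blast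
  then show ?thesis using assms unfolding graph_aut_def by simp
qed

lemma aut_restrict: "graph_aut V E f \<Longrightarrow> graph_aut V E (restrict f V)"
  by (erule aut_cong) simp

lemma aut_comp: assumes "graph_aut V E f" "graph_aut V E g" shows "graph_aut V E (f \<circ> g)"
proof -
  have "bij_betw (f \<circ> g) V V" using assms aut_bij bij_betw_trans by blast
  moreover have "E (f (g x)) (f (g y)) = E x y" if "x \<in> V" "y \<in> V" for x y
    using that assms aut_adj_iff aut_in_V by metis
  ultimately show ?thesis unfolding graph_aut_def by simp
qed

lemma aut_inv_into: assumes "graph_aut V E f" shows "graph_aut V E (inv_into V f)"
proof -
  have "bij_betw (inv_into V f) V V" using assms aut_bij bij_betw_inv_into by blast
  moreover have "E (inv_into V f x) (inv_into V f y) = E x y" if "x \<in> V" "y \<in> V" for x y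
    using aut_adj_iff[OF assms] aut_inv_into_right[OF assms] aut_inv_into_in_V[OF assms] that
    by metis
  ultimately show ?thesis unfolding graph_aut_def by simp
qed

lemma dist_aut: assumes "graph_aut V E f" "x \<in> V" "y \<in> V" shows "d (f x) (f y) = d x y"
proof -
  have "d (inv_into V f (f x)) (inv_into V f (f y)) \<le> d (f x) (f y)"
    using dist_aut_le[OF aut_inv_into[OF assms(1)]] aut_in_V assms by blast
  then show ?thesis using dist_aut_le[OF assms] aut_inv_into_left assms by fastforce
qed

end

section \<open>Halves of a mirror class\<close>

locale mirror_graph_setting = connected_simple_graph + assumes mirror: "mirror_graph V E"
begin

definition mirror_partition where
  "mirror_partition P \<longleftrightarrow> {} \<notin> P \<and> \<Union>P = edges E \<and> (\<forall>F1\<in>P. \<forall>F2\<in>P. F1 \<noteq> F2 \<longrightarrow> F1 \<inter> F2 = {}) \<and>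
     (\<forall>Ei\<in>P. \<exists>\<alpha>. graph_aut V E \<alpha>
        \<and> (\<forall>x y. E x y \<and> {x, y} \<in> Ei \<longrightarrow> \<alpha> x = y \<and> \<alpha> y = x)
        \<and> (\<exists>C1 C2. components V (del_edges E Ei) = {C1, C2} \<and> C1 \<noteq> C2 \<and> \<alpha> ` C1 = C2))"

definition mirror_classes where "mirror_classes = (SOME P. mirror_partition P)"

lemma mirror_partition_mirror_classes: "mirror_partition mirror_classes"
proof -
  have "\<exists>P. mirror_partition P" using mirror unfolding mirror_graph_def mirror_partition_def by blast
  then show ?thesis unfolding mirror_classes_def by (rule someI_ex)
qed

lemma mirror_classes_Union: "\<Union>mirror_classes = edges E"
  using mirror_partition_mirror_classes unfolding mirror_partition_def by (elim conjE)

lemma mirror_classes_nonempty: "{} \<notin> mirror_classes"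
  using mirror_partition_mirror_classes unfolding mirror_partition_def by (elim conjE)

lemma mirror_classes_disjoint:
  assumes "F1 \<in> mirror_classes" "F2 \<in> mirror_classes" "F1 \<noteq> F2" shows "F1 \<inter> F2 = {}"
proof -
  have "\<forall>F1\<in>mirror_classes. \<forall>F2\<in>mirror_classes. F1 \<noteq> F2 \<longrightarrow> F1 \<inter> F2 = {}"
    using mirror_partition_mirror_classes unfolding mirror_partition_def by (elim conjE)
  then show ?thesis using assms by blast
qed

lemma mirror_classes_mirror:
  assumes "F \<in> mirror_classes"
  obtains \<alpha> C1 C2 where "graph_aut V E \<alpha>" "\<forall>x y. E x y \<and> {x, y} \<in> F \<longrightarrow> \<alpha> x = y \<and> \<alpha> y = x"
    "components V (del_edges E F) = {C1, C2}" "C1 \<noteq> C2" "\<alpha> ` C1 = C2"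
proof -
  have "\<forall>Ei\<in>mirror_classes. \<exists>\<alpha>. graph_aut V E \<alpha>
        \<and> (\<forall>x y. E x y \<and> {x, y} \<in> Ei \<longrightarrow> \<alpha> x = y \<and> \<alpha> y = x)
        \<and> (\<exists>C1 C2. components V (del_edges E Ei) = {C1, C2} \<and> C1 \<noteq> C2 \<and> \<alpha> ` C1 = C2)"
    using mirror_partition_mirror_classes unfolding mirror_partition_def by (elim conjE)
  from bspec[OF this assms] show ?thesis by (elim exE conjE) (rule that)
qed

lemma class_of_edge: assumes "E x y" shows "\<exists>F\<in>mirror_classes. {x,y} \<in> F"
  using assms mirror_classes_Union unfolding edges_def by blast

lemma class_has_edge: assumes "F \<in> mirror_classes" shows "\<exists>x y. E x y \<and> {x,y} \<in> F"
proof -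
  obtain e where "e \<in> F" using assms mirror_classes_nonempty by (metis all_not_in_conv)
  then have "e \<in> edges E" using assms mirror_classes_Union by blast
  then show ?thesis using \<open>e \<in> F\<close> unfolding edges_def by blast
qed

definition swaps where "swaps F f \<longleftrightarrow> (\<forall>a b. E a b \<and> {a,b} \<in> F \<longrightarrow> f a = b \<and> f b = a)"

text \<open>\<open>W1\<close> and \<open>W2\<close> are the two components of \<open>G - F\<close> (whence the walks inside them), swapped by
  the mirror \<open>\<sigma>\<close> of the class \<open>F\<close>.\<close>
definition halves where
  "halves F W1 W2 \<sigma> \<longleftrightarrow> W1 \<union> W2 = V \<and> W1 \<inter> W2 = {} \<and> W1 \<noteq> {} \<and> W2 \<noteq> {}
    \<and> graph_aut V E \<sigma> \<and> \<sigma> ` W1 = W2 \<and> \<sigma> ` W2 = W1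
    \<and> (\<forall>x y. E x y \<longrightarrow> {x,y} \<notin> F \<longrightarrow> (x \<in> W1 \<longleftrightarrow> y \<in> W1))
    \<and> (\<forall>x y. E x y \<longrightarrow> {x,y} \<in> F \<longrightarrow> \<sigma> x = y \<and> \<sigma> y = x)
    \<and> (\<forall>x y. E x y \<longrightarrow> {x,y} \<in> F \<longrightarrow> (x \<in> W1 \<longleftrightarrow> y \<in> W2))
    \<and> (\<forall>x\<in>W1. \<forall>y\<in>W1. \<exists>p. walk (del_edges E F) p \<and> set p \<subseteq> W1 \<and> hd p = x \<and> last p = y)
    \<and> (\<forall>x\<in>W2. \<forall>y\<in>W2. \<exists>p. walk (del_edges E F) p \<and> set p \<subseteq> W2 \<and> hd p = x \<and> last p = y)"

lemma
  assumes "halves F W1 W2 \<sigma>"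
  shows halves_Un: "W1 \<union> W2 = V"
    and halves_disjoint: "W1 \<inter> W2 = {}"
    and halves_nonempty: "W1 \<noteq> {}" "W2 \<noteq> {}"
    and halves_aut: "graph_aut V E \<sigma>"
    and halves_image: "\<sigma> ` W1 = W2" "\<sigma> ` W2 = W1"
    and halves_same_all: "\<forall>x y. E x y \<longrightarrow> {x,y} \<notin> F \<longrightarrow> (x \<in> W1 \<longleftrightarrow> y \<in> W1)"
    and halves_swap_all: "\<forall>x y. E x y \<longrightarrow> {x,y} \<in> F \<longrightarrow> \<sigma> x = y \<and> \<sigma> y = x"
    and halves_cross_all: "\<forall>x y. E x y \<longrightarrow> {x,y} \<in> F \<longrightarrow> (x \<in> W1 \<longleftrightarrow> y \<in> W2)"
    and halves_walk_all:
      "\<forall>x\<in>W1. \<forall>y\<in>W1. \<exists>p. walk (del_edges E F) p \<and> set p \<subseteq> W1 \<and> hd p = x \<and> last p = y"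
      "\<forall>x\<in>W2. \<forall>y\<in>W2. \<exists>p. walk (del_edges E F) p \<and> set p \<subseteq> W2 \<and> hd p = x \<and> last p = y"
  by (insert assms, unfold halves_def) (elim conjE; assumption)+

lemma
  assumes "halves F W1 W2 \<sigma>"
  shows halves_in_V: "x \<in> W1 \<Longrightarrow> x \<in> V" "x \<in> W2 \<Longrightarrow> x \<in> V"
    and halves_iff: "x \<in> V \<Longrightarrow> x \<in> W1 \<longleftrightarrow> x \<notin> W2"
    and halves_same: "E x y \<Longrightarrow> {x,y} \<notin> F \<Longrightarrow> x \<in> W1 \<longleftrightarrow> y \<in> W1"
    and halves_swap: "E x y \<Longrightarrow> {x,y} \<in> F \<Longrightarrow> \<sigma> x = y \<and> \<sigma> y = x"
    and halves_cross: "E x y \<Longrightarrow> {x,y} \<in> F \<Longrightarrow> x \<in> W1 \<longleftrightarrow> y \<in> W2"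
    and halves_walk: "x \<in> W1 \<Longrightarrow> y \<in> W1 \<Longrightarrow>
      \<exists>p. walk (del_edges E F) p \<and> set p \<subseteq> W1 \<and> hd p = x \<and> last p = y"
  using halves_Un[OF assms] halves_disjoint[OF assms] halves_same_all[OF assms]
    halves_swap_all[OF assms] halves_cross_all[OF assms] halves_walk_all[OF assms] by blast+

lemma halves_sym: assumes "halves F W1 W2 \<sigma>" shows "halves F W2 W1 \<sigma>"
proof -
  have "\<forall>x y. E x y \<longrightarrow> {x,y} \<notin> F \<longrightarrow> (x \<in> W2 \<longleftrightarrow> y \<in> W2)"
    "\<forall>x y. E x y \<longrightarrow> {x,y} \<in> F \<longrightarrow> (x \<in> W2 \<longleftrightarrow> y \<in> W1)"
    using halves_same[OF assms] halves_cross[OF assms] halves_iff[OF assms] adj_in_V by blast+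
  moreover have "W2 \<union> W1 = V" "W2 \<inter> W1 = {}" using halves_Un[OF assms] halves_disjoint[OF assms] by blast+
  ultimately show ?thesis
    unfolding halves_def using halves_nonempty[OF assms] halves_aut[OF assms] halves_image[OF assms]
      halves_swap_all[OF assms] halves_walk_all[OF assms] by simp
qed

lemma halves_swaps: "halves F W1 W2 \<sigma> \<Longrightarrow> swaps F \<sigma>"
  using halves_swap unfolding swaps_def by blast

lemma halves_exist: assumes F: "F \<in> mirror_classes" shows "\<exists>W1 W2 \<sigma>. halves F W1 W2 \<sigma>"
proof -
  obtain \<alpha> C1 C2 where aut: "graph_aut V E \<alpha>"
    and swap: "\<forall>x y. E x y \<and> {x, y} \<in> F \<longrightarrow> \<alpha> x = y \<and> \<alpha> y = x"
    and comps: "components V (del_edges E F) = {C1, C2}" "C1 \<noteq> C2" "\<alpha> ` C1 = C2"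
    using mirror_classes_mirror[OF F] .
  let ?R = "del_edges E F"
  have R_sym: "?R x y \<Longrightarrow> ?R y x" for x y
    unfolding del_edges_def using adj_sym by (simp add: insert_commute)
  have R_in_V: "?R x y \<Longrightarrow> x \<in> V \<and> y \<in> V" for x y
    unfolding del_edges_def using adj_in_V by blast
  have C: "C1 \<in> components V ?R" "C2 \<in> components V ?R" using comps(1) by auto
  have union: "C1 \<union> C2 = V" and disj: "C1 \<inter> C2 = {}" and ne: "C1 \<noteq> {}" "C2 \<noteq> {}"
    using two_components[where R = ?R, OF R_sym R_in_V comps(1,2)] by blast+
  have img2: "\<alpha> ` C2 = C1" using bij_betw_swap_complement[OF aut_bij[OF aut] union disj comps(3)] .
  have same: "x \<in> C1 \<longleftrightarrow> y \<in> C1" if "E x y" "{x,y} \<notin> F" for x y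
  proof -
    have "?R x y" "?R y x" using that R_sym unfolding del_edges_def by blast+
    then show ?thesis using component_closed[where R = ?R, OF R_sym R_in_V C(1)] by blast
  qed
  have cross: "x \<in> C1 \<longleftrightarrow> y \<in> C2" if "E x y" "{x,y} \<in> F" for x y
  proof -
    have "\<alpha> x = y" "x \<in> V" using swap that adj_in_V by blast+
    then show ?thesis using union disj comps(3) img2 by blast
  qed
  have "\<forall>x\<in>C1. \<forall>y\<in>C1. \<exists>p. walk ?R p \<and> set p \<subseteq> C1 \<and> hd p = x \<and> last p = y"
    "\<forall>x\<in>C2. \<forall>y\<in>C2. \<exists>p. walk ?R p \<and> set p \<subseteq> C2 \<and> hd p = x \<and> last p = y"
    using component_walk[where R = ?R, OF R_sym R_in_V] C by blast+
  then have "halves F C1 C2 \<alpha>"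
    unfolding halves_def using union disj ne aut comps(3) img2 same swap cross by simp
  then show ?thesis by blast
qed

lemma halves_exist_at:
  assumes "F \<in> mirror_classes" "x \<in> V" shows "\<exists>W1 W2 \<sigma>. halves F W1 W2 \<sigma> \<and> x \<in> W1"
  using halves_exist[OF assms(1)] halves_sym halves_iff assms(2) by metis

lemma dist_across1:
  assumes c: "halves F W1 W2 \<sigma>" and e: "E x y" "{x,y} \<in> F" and x: "x \<in> W1" and a: "a \<in> W1"
  shows "d a y = Suc (d a x)"
proof -
  have y2: "y \<in> W2" using halves_cross[OF c e] x by blast
  have V: "a \<in> V" "x \<in> V" "y \<in> V" using a adj_in_V[OF e(1)] halves_in_V c by auto
  have le: "d a y \<le> Suc (d a x)" using dist_adj_le[OF e(1) V(1)] .
  obtain p where p: "walk_betw p a y (d a y)" using dist_walk[OF V(1,3)] by blast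
  have "y \<notin> W1" using y2 c halves_iff V by blast
  then obtain p1 u w p2 where pp: "p = p1 @ u # w # p2" "u \<in> W1" "w \<notin> W1"
    using walk_leaves[of E p "\<lambda>z. z \<in> W1"] p a unfolding walk_betw_def by blast
  have euw: "E u w" using p pp walk_middle_edge unfolding walk_betw_def by metis
  then have uwV: "u \<in> V" "w \<in> V" using adj_in_V by blast+
  have F: "{u,w} \<in> F" using halves_same[OF c euw] pp by blast
  have "\<sigma> u = w" "\<sigma> w = u" "\<sigma> x = y" "\<sigma> y = x" using halves_swap[OF c] euw F e by auto
  then have "d u x = d w y" using dist_aut[OF halves_aut[OF c] uwV(2) V(3)] by simp
  moreover have "d a x \<le> d a u + d u x" using dist_triangle V uwV by blast
  moreover have "d a u + d w y + 1 \<le> d a y" using dist_split_walk p pp by blast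
  ultimately show ?thesis using le by linarith
qed

lemma dist_across2:
  assumes c: "halves F W1 W2 \<sigma>" and e: "E x y" "{x,y} \<in> F" and x: "x \<in> W1" and a: "a \<in> W2"
  shows "d a x = Suc (d a y)"
proof -
  have "y \<in> W2" using halves_cross[OF c e] x by blast
  moreover have "E y x" "{y,x} \<in> F" using e adj_sym by (auto simp: insert_commute)
  ultimately show ?thesis using dist_across1[OF halves_sym[OF c]] a by blast
qed

lemma dist_adj_cases:
  assumes e: "E x y" and a: "a \<in> V" shows "d a y = Suc (d a x) \<or> d a x = Suc (d a y)"
proof -
  obtain F where F: "F \<in> mirror_classes" "{x,y} \<in> F" using class_of_edge[OF e] by blast
  obtain W1 W2 \<sigma> where c: "halves F W1 W2 \<sigma>" "x \<in> W1" using halves_exist_at F adj_in_V e by blast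
  show ?thesis
  proof (cases "a \<in> W1")
    case True
    then show ?thesis using dist_across1 c e F by blast
  next
    case False
    then have "a \<in> W2" using c a halves_iff by blast
    then show ?thesis using dist_across2 c e F by blast
  qed
qed

definition nearer where "nearer x y a \<longleftrightarrow> d a x < d a y"

lemma nearer_iff_half:
  assumes c: "halves F W1 W2 \<sigma>" and e: "E x y" "{x,y} \<in> F" and x: "x \<in> W1" and a: "a \<in> V"
  shows "nearer x y a \<longleftrightarrow> a \<in> W1"
  using dist_across1[OF c e x] dist_across2[OF c e x] halves_iff[OF c a] unfolding nearer_def
  by (cases "a \<in> W1") simp_all

lemma theta_iff_nearer: assumes "E a b" "E x y"
  shows "theta V E a b x y \<longleftrightarrow> (nearer x y a \<longleftrightarrow> \<not> nearer x y b)"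
proof -
  have "a \<in> V" "b \<in> V" using assms adj_in_V by blast+
  then have "d a y = Suc (d a x) \<or> d a x = Suc (d a y)" "d b y = Suc (d b x) \<or> d b x = Suc (d b y)"
    using dist_adj_cases assms by blast+
  then show ?thesis unfolding theta_def nearer_def by auto
qed

lemma theta_iff_class: assumes F: "F \<in> mirror_classes" "{x,y} \<in> F" and e: "E x y" "E a b"
  shows "theta V E a b x y \<longleftrightarrow> {a,b} \<in> F"
proof -
  obtain W1 W2 \<sigma> where c: "halves F W1 W2 \<sigma>" "x \<in> W1" using halves_exist_at F adj_in_V e by blast
  have ab: "a \<in> V" "b \<in> V" using e adj_in_V by blast+
  have "nearer x y a \<longleftrightarrow> a \<in> W1" "nearer x y b \<longleftrightarrow> b \<in> W1"
    using nearer_iff_half[OF c(1) e(1) F(2) c(2)] ab by blast+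
  then show ?thesis
    using theta_iff_nearer[OF e(2) e(1)] halves_cross[OF c(1) e(2)] halves_same[OF c(1) e(2)]
      halves_iff[OF c(1)] ab by blast
qed

lemma mirror_aut_theta_eq: assumes "E a b" "E x y" "theta V E a b x y"
  shows "mirror_aut V E a b = mirror_aut V E x y"
proof -
  obtain F where F: "F \<in> mirror_classes" "{x,y} \<in> F" using class_of_edge assms by blast
  have abF: "{a,b} \<in> F" using theta_iff_class[OF F assms(2,1)] assms(3) by blast
  have eq: "theta V E c e a b = theta V E c e x y" if "E c e" for c e
    using theta_iff_class[OF F assms(2) that] theta_iff_class[OF F(1) abF assms(1) that] by blast
  have "(\<forall>c e. E c e \<and> theta V E c e a b \<longrightarrow> Q c e) \<longleftrightarrow> (\<forall>c e. E c e \<and> theta V E c e x y \<longrightarrow> Q c e)"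
    for Q using eq by blast
  then show ?thesis unfolding mirror_aut_def by simp
qed

section \<open>Uniqueness of mirror automorphisms\<close>

lemma halves_card: assumes c: "halves F W1 W2 \<sigma>" shows "card W1 = card W2"
proof -
  have "inj_on \<sigma> W1"
    using aut_bij[OF halves_aut[OF c]] halves_in_V[OF c] unfolding bij_betw_def by (meson inj_on_subset subsetI)
  then show ?thesis using card_image halves_image[OF c] by metis
qed

lemma halves_card_V: assumes c: "halves F W1 W2 \<sigma>" shows "card V = card W1 + card W2"
proof -
  have "finite W1" "finite W2" using finite_V finite_subset halves_in_V[OF c] by (meson subsetI)+
  then show ?thesis using card_Un_disjoint[of W1 W2] halves_Un[OF c] halves_disjoint[OF c] by simp
qed

lemma half_subset_half:
  assumes c: "halves F W1 W2 \<sigma>" and cc: "halves C U1 U2 \<tau>"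
    and no_edge: "\<And>u u'. E u u' \<Longrightarrow> {u,u'} \<in> C \<Longrightarrow> u \<in> W2 \<Longrightarrow> u' \<notin> W2"
    and x0: "x0 \<in> W2" "x0 \<in> U1"
  shows "W2 \<subseteq> U1"
proof
  fix x assume x: "x \<in> W2"
  obtain p where p: "walk (del_edges E F) p" "set p \<subseteq> W2" "hd p = x0" "last p = x"
    using halves_walk[OF halves_sym[OF c] x0(1) x] by blast
  have "\<forall>u w. (del_edges E F u w \<and> u \<in> W2 \<and> w \<in> W2) \<longrightarrow> (u \<in> U1 \<longleftrightarrow> w \<in> U1)"
    using no_edge halves_same[OF cc] unfolding del_edges_def by blast
  then have "x0 \<in> U1 \<longleftrightarrow> x \<in> U1" using walk_preserves[OF walk_restrict[OF p(1,2)]] p(3,4) by simp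
  then show "x \<in> U1" using x0(2) by simp
qed

text \<open>By cardinality: \<open>\<sigma>\<close> maps each half of a class bijectively onto the other.\<close>
lemma halves_eq_if_subset:
  assumes c: "halves F W1 W2 \<sigma>" and cc: "halves C U1 U2 \<tau>" and sub: "W2 \<subseteq> U1"
  shows "U2 = W1"
proof -
  have "U2 \<subseteq> W1"
  proof
    fix u assume u: "u \<in> U2"
    then have "u \<in> V" using halves_in_V(2)[OF cc] by blast
    then show "u \<in> W1" using u sub halves_iff[OF c] halves_iff[OF cc] by blast
  qed
  moreover have "card U2 = card W1"
    using halves_card[OF c] halves_card[OF cc] halves_card_V[OF c] halves_card_V[OF cc] by linarith
  moreover have "finite W1" using finite_V finite_subset halves_in_V[OF c] by (meson subsetI)
  ultimately show ?thesis using card_subset_eq by blast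
qed

lemma class_edge_inside_half:
  assumes c: "halves F W1 W2 \<sigma>" and F: "F \<in> mirror_classes" and C: "C \<in> mirror_classes" "C \<noteq> F"
  shows "\<exists>u u'. E u u' \<and> {u,u'} \<in> C \<and> u \<in> W2 \<and> u' \<in> W2"
proof (rule ccontr)
  assume no_edge: "\<not> ?thesis"
  obtain x0 where x0: "x0 \<in> W2" using halves_nonempty[OF c] by blast
  obtain U1 U2 \<tau> where cc: "halves C U1 U2 \<tau>" "x0 \<in> U1"
    using halves_exist_at[OF C(1)] halves_in_V(2)[OF c x0] by blast
  have "W2 \<subseteq> U1" using half_subset_half[OF c cc(1) _ x0 cc(2)] no_edge by blast
  then have U2: "U2 = W1" using halves_eq_if_subset[OF c cc(1)] by blast
  obtain u u' where uu: "E u u'" "{u,u'} \<in> C" using class_has_edge[OF C(1)] by blast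
  then have "{u,u'} \<notin> F" using mirror_classes_disjoint C F by blast
  then have "u \<in> W1 \<longleftrightarrow> u' \<in> W1" using halves_same[OF c uu(1)] by blast
  moreover have "u \<in> U1 \<longleftrightarrow> u' \<in> U2" using halves_cross[OF cc(1) uu] .
  ultimately show False using U2 halves_iff[OF cc(1)] adj_in_V[OF uu(1)] by blast
qed

lemma separating_class:
  assumes c: "halves F W1 W2 \<sigma>" and z: "z \<in> W1" "z' \<in> W1" and ne: "z \<noteq> z'"
  obtains C U1 U2 \<tau> where "C \<in> mirror_classes" "C \<noteq> F" "halves C U1 U2 \<tau>" "z \<in> U1" "z' \<in> U2"
proof -
  have zV: "z \<in> V" "z' \<in> V" using halves_in_V[OF c] z by blast+
  have "d z' z \<noteq> 0" using dist_eq_0[OF zV(2) zV(1)] ne by metis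
  then obtain n where n: "d z' z = Suc n" by (cases "d z' z") auto
  obtain y where ye: "E y z" "d z' y = n" using dist_Suc_neighbour[OF zV(2) zV(1) n] by blast
  have e: "E z y" using adj_sym ye by blast
  obtain C where C: "C \<in> mirror_classes" "{z,y} \<in> C" using class_of_edge[OF e] by blast
  have "{z,y} \<notin> F" using dist_across1[OF c e _ z] n ye by auto
  then have CF: "C \<noteq> F" using C by blast
  obtain U1 U2 \<tau> where cc: "halves C U1 U2 \<tau>" "z \<in> U1" using halves_exist_at[OF C(1) zV(1)] by blast
  have "nearer z y z' \<longleftrightarrow> z' \<in> U1" using nearer_iff_half[OF cc(1) e C(2) cc(2) zV(2)] .
  moreover have "\<not> nearer z y z'" unfolding nearer_def using n ye by simp
  ultimately have "z' \<in> U2" using halves_iff[OF cc(1) zV(2)] by blast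
  then show ?thesis using that C CF cc by blast
qed

lemma edge_dist_separates:
  assumes cc: "halves C U1 U2 \<tau>" and e: "E u u'" "{u,u'} \<in> C" and z: "z \<in> U1" "z' \<in> U2"
  shows "d z u \<noteq> d z' u \<or> d z u' \<noteq> d z' u'"
proof (cases "u \<in> U1")
  case True
  then show ?thesis using dist_across1[OF cc e True z(1)] dist_across2[OF cc e True z(2)] by simp
next
  case False
  then have u': "u' \<in> U1" using halves_cross[OF cc e] halves_iff[OF cc] adj_in_V[OF e(1)] by blast
  have "E u' u" "{u',u} \<in> C" using e adj_sym by (auto simp: insert_commute)
  then show ?thesis using dist_across1[OF cc _ _ u' z(1)] dist_across2[OF cc _ _ u' z(2)] by simp
qed

lemma eq_if_dist_eq_on_half:
  assumes c: "halves F W1 W2 \<sigma>" and F: "F \<in> mirror_classes" and z: "z \<in> V" "z' \<in> V"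
    and eq: "\<forall>u\<in>W2. d u z = d u z'"
  shows "z = z'"
proof (rule ccontr)
  assume ne: "z \<noteq> z'"
  have "z \<notin> W2" "z' \<notin> W2" using eq dist_self dist_eq_0 z ne by metis+
  then have z1: "z \<in> W1" "z' \<in> W1" using halves_iff[OF c] z by blast+
  obtain C U1 U2 \<tau> where C: "C \<in> mirror_classes" "C \<noteq> F" and cc: "halves C U1 U2 \<tau>"
    and zU: "z \<in> U1" "z' \<in> U2"
    using separating_class[OF c z1 ne] by blast
  obtain u u' where uu: "E u u'" "{u,u'} \<in> C" "u \<in> W2" "u' \<in> W2"
    using class_edge_inside_half[OF c F C] by blast
  have "d z u = d z' u" "d z u' = d z' u'"
    using eq uu(3,4) dist_sym z adj_in_V[OF uu(1)] by metis+
  then show False using edge_dist_separates[OF cc uu(1,2) zU] by blast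
qed

lemma class_edge_across:
  assumes c: "halves F W1 W2 \<sigma>" and F: "F \<in> mirror_classes"
  obtains p q where "E p q" "{p,q} \<in> F" "p \<in> W1" "q \<in> W2"
proof -
  obtain p q where pq: "E p q" "{p,q} \<in> F" using class_has_edge[OF F] by blast
  then have qp: "E q p" "{q,p} \<in> F" using adj_sym by (auto simp: insert_commute)
  show ?thesis
  proof (cases "p \<in> W1")
    case True
    then show ?thesis using that pq halves_cross[OF c pq] by blast
  next
    case False
    then show ?thesis using that qp halves_cross[OF c qp] halves_iff[OF c] adj_in_V[OF pq(1)] by blast
  qed
qed

lemma swaps_del_edges:
  assumes f: "graph_aut V E f" and sw: "swaps F f" and e: "del_edges E F a b"
  shows "del_edges E F (f a) (f b)"
proof -
  have eab: "E a b" "{a,b} \<notin> F" using e unfolding del_edges_def by simp_all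
  have abV: "a \<in> V" "b \<in> V" "f a \<in> V" "f b \<in> V" using adj_in_V eab(1) aut_in_V[OF f] by blast+
  have efab: "E (f a) (f b)" using aut_adj[OF f eab(1)] .
  have "{f a, f b} \<notin> F"
  proof
    assume inF: "{f a, f b} \<in> F"
    then have "f (f a) = f b" "f (f b) = f a" using sw efab unfolding swaps_def by blast+
    then have "f a = b" "f b = a" using aut_inj[OF f] abV by blast+
    then show False using inF eab(2) by (simp add: insert_commute)
  qed
  then show ?thesis using efab unfolding del_edges_def by simp
qed

lemma swapping_aut_half:
  assumes c: "halves F W1 W2 \<sigma>" and F: "F \<in> mirror_classes" and f: "graph_aut V E f"
    and sw: "swaps F f" and x: "x \<in> W1"
  shows "f x \<in> W2"
proof -
  obtain p q where pq: "E p q" "{p,q} \<in> F" "p \<in> W1" "q \<in> W2" using class_edge_across[OF c F] by blast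
  have fp: "f p = q" using sw pq unfolding swaps_def by blast
  obtain w where w: "walk (del_edges E F) w" "set w \<subseteq> W1" "hd w = p" "last w = x"
    using halves_walk[OF c pq(3) x] by blast
  have "walk (del_edges E F) (map f w)"
    using walk_map[of "del_edges E F" w "del_edges E F" f] w(1) swaps_del_edges[OF f sw] by blast
  moreover have "\<forall>u v. del_edges E F u v \<longrightarrow> (u \<in> W2 \<longleftrightarrow> v \<in> W2)"
    using halves_same[OF halves_sym[OF c]] unfolding del_edges_def by blast
  ultimately have "hd (map f w) \<in> W2 \<longleftrightarrow> last (map f w) \<in> W2" by (rule walk_preserves)
  moreover have "w \<noteq> []" using walk_nonempty w(1) by blast
  ultimately have "f p \<in> W2 \<longleftrightarrow> f x \<in> W2" using w(3,4) by (simp add: hd_map last_map)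
  then show ?thesis using fp pq(4) by simp
qed

lemma swapping_aut_dist_le:
  assumes c: "halves F W1 W2 \<sigma>" and F: "F \<in> mirror_classes"
    and f: "graph_aut V E f" "swaps F f" and g: "graph_aut V E g" "swaps F g"
    and z: "z \<in> W2" and u: "u \<in> W2"
  shows "d u (f z) \<le> d u (g z)"
proof -
  have gz: "g z \<in> W1" using swapping_aut_half[OF halves_sym[OF c] F g z] .
  have zV: "z \<in> V" and uV: "u \<in> V" using z u halves_in_V[OF c] by blast+
  have gzV: "g z \<in> V" "f z \<in> V" using aut_in_V f(1) g(1) zV by blast+
  obtain q where q: "walk_betw q u (g z) (d u (g z))" using dist_walk[OF uV gzV(1)] by blast
  have "g z \<notin> W2" using gz halves_iff[OF c gzV(1)] by blast
  moreover have qw: "walk E q" "hd q = u" "last q = g z" using q unfolding walk_betw_def by simp_all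
  ultimately have "\<exists>q1 a b q2. q = q1 @ a # b # q2 \<and> a \<in> W2 \<and> b \<notin> W2"
    using walk_leaves[of E q "\<lambda>x. x \<in> W2"] u by simp
  then obtain q1 a b q2 where qq: "q = q1 @ a # b # q2" "a \<in> W2" "b \<notin> W2" by blast
  have eab: "E a b" using q qq walk_middle_edge unfolding walk_betw_def by metis
  have abV: "a \<in> V" "b \<in> V" using adj_in_V eab by blast+
  have abF: "{a,b} \<in> F" using halves_same[OF halves_sym[OF c] eab] qq by blast
  have fa: "f a = b" and ga: "g a = b" using f(2) g(2) eab abF unfolding swaps_def by blast+
  have "d b (f z) = d a z" using dist_aut[OF f(1) abV(1) zV] fa by simp
  moreover have "d b (g z) = d a z" using dist_aut[OF g(1) abV(1) zV] ga by simp
  moreover have "d u (f z) \<le> d u a + d a (f z)" using dist_triangle uV abV gzV by blast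
  moreover have "d a (f z) \<le> d a b + d b (f z)" using dist_triangle uV abV gzV by blast
  moreover have "d a b = 1" using dist_adj[OF eab] .
  moreover have "d u a + d b (g z) + 1 \<le> d u (g z)" using dist_split_walk q qq by blast
  ultimately show ?thesis by linarith
qed

lemma swapping_aut_unique:
  assumes F: "F \<in> mirror_classes" and f: "graph_aut V E f" "swaps F f" and g: "graph_aut V E g" "swaps F g"
    and z: "z \<in> V"
  shows "f z = g z"
proof -
  obtain W1 W2 \<sigma> where c0: "halves F W1 W2 \<sigma>" "z \<in> W1" using halves_exist_at[OF F z] by blast
  have c: "halves F W2 W1 \<sigma>" using halves_sym[OF c0(1)] .
  have V: "f z \<in> V" "g z \<in> V" using aut_in_V f(1) g(1) z by blast+
  have "\<forall>u\<in>W1. d u (f z) = d u (g z)"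
    using swapping_aut_dist_le[OF c F f g c0(2)] swapping_aut_dist_le[OF c F g f c0(2)] by (meson antisym)
  then show ?thesis using eq_if_dist_eq_on_half[OF c F V] by blast
qed

definition is_mirror where "is_mirror x y f \<longleftrightarrow> f \<in> extensional V \<and> graph_aut V E f \<and>
   (\<forall>a b. E a b \<and> theta V E a b x y \<longrightarrow> f a = b \<and> f b = a)"

lemma is_mirror_ex1: assumes e: "E x y" shows "\<exists>!f. is_mirror x y f"
proof -
  obtain F where F: "F \<in> mirror_classes" "{x,y} \<in> F" using class_of_edge[OF e] by blast
  obtain W1 W2 \<sigma> where c: "halves F W1 W2 \<sigma>" using halves_exist[OF F(1)] by blast
  have th: "\<And>a b. E a b \<Longrightarrow> theta V E a b x y \<longleftrightarrow> {a,b} \<in> F" using theta_iff_class[OF F e] by blast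
  have sw1: "\<forall>a b. E a b \<and> theta V E a b x y \<longrightarrow> restrict \<sigma> V a = b \<and> restrict \<sigma> V b = a"
  proof (intro allI impI)
    fix a b assume ab: "E a b \<and> theta V E a b x y"
    then have "{a,b} \<in> F" using th by blast
    then have "\<sigma> a = b \<and> \<sigma> b = a" using halves_swap[OF c] ab by blast
    moreover have "a \<in> V" "b \<in> V" using adj_in_V ab by blast+
    ultimately show "restrict \<sigma> V a = b \<and> restrict \<sigma> V b = a" by simp
  qed
  have P1: "is_mirror x y (restrict \<sigma> V)"
    unfolding is_mirror_def using aut_restrict[OF halves_aut[OF c]] sw1 by simp
  have P2: "f = restrict \<sigma> V" if "is_mirror x y f" for f
  proof (rule ext)
    fix z
    have fe: "f \<in> extensional V" and fa: "graph_aut V E f"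
      and fs: "\<forall>a b. E a b \<and> theta V E a b x y \<longrightarrow> f a = b \<and> f b = a" using that unfolding is_mirror_def by blast+
    show "f z = restrict \<sigma> V z"
    proof (cases "z \<in> V")
      case True
      have "swaps F f" using fs th unfolding swaps_def by blast
      then show ?thesis
        using swapping_aut_unique[OF F(1) fa _ halves_aut[OF c] halves_swaps[OF c] True] True by simp
    next
      case False then show ?thesis using fe by (simp add: extensional_def)
    qed
  qed
  show ?thesis using P1 P2 by blast
qed

lemma mirror_aut_The: "mirror_aut V E x y = (THE f. is_mirror x y f)"
  unfolding mirror_aut_def is_mirror_def by simp

lemma is_mirror_mirror_aut: "E x y \<Longrightarrow> is_mirror x y (mirror_aut V E x y)"
  unfolding mirror_aut_The by (rule theI'[OF is_mirror_ex1])

lemma is_mirror_unique: "E x y \<Longrightarrow> is_mirror x y f \<Longrightarrow> f = mirror_aut V E x y"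
  unfolding mirror_aut_The by (rule the1_equality[OF is_mirror_ex1, symmetric])

lemma mirror_aut_aut: "E x y \<Longrightarrow> graph_aut V E (mirror_aut V E x y)"
  using is_mirror_mirror_aut unfolding is_mirror_def by blast
lemma mirror_aut_extensional: "E x y \<Longrightarrow> mirror_aut V E x y \<in> extensional V"
  using is_mirror_mirror_aut unfolding is_mirror_def by blast
lemma mirror_aut_swap: "E x y \<Longrightarrow> E a b \<Longrightarrow> theta V E a b x y \<Longrightarrow>
    mirror_aut V E x y a = b \<and> mirror_aut V E x y b = a"
  using is_mirror_mirror_aut unfolding is_mirror_def by blast

lemma theta_refl: assumes "E x y" shows "theta V E x y x y"
proof -
  have "x \<in> V" "y \<in> V" using assms adj_in_V by blast+
  then show ?thesis unfolding theta_def using dist_self dist_adj[OF assms] dist_adj[OF adj_sym[OF assms]] by simp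
qed

lemma mirror_aut_endpoints: "E x y \<Longrightarrow> mirror_aut V E x y x = y \<and> mirror_aut V E x y y = x"
  using mirror_aut_swap theta_refl by blast

lemma mirror_aut_involution: assumes e: "E x y" and z: "z \<in> V" shows "mirror_aut V E x y (mirror_aut V E x y z) = z"
proof -
  let ?M = "mirror_aut V E x y"
  let ?g = "restrict (inv_into V ?M) V"
  have Ma: "graph_aut V E ?M" using mirror_aut_aut[OF e] .
  have sw: "\<forall>a b. E a b \<and> theta V E a b x y \<longrightarrow> ?g a = b \<and> ?g b = a"
  proof (intro allI impI)
    fix a b assume ab: "E a b \<and> theta V E a b x y"
    then have s: "?M a = b" "?M b = a" using mirror_aut_swap[OF e] by blast+
    have abV: "a \<in> V" "b \<in> V" using adj_in_V ab by blast+
    show "?g a = b \<and> ?g b = a" using aut_inv_into_left[OF Ma abV(1)] aut_inv_into_left[OF Ma abV(2)] s abV by simp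
  qed
  have "is_mirror x y ?g" unfolding is_mirror_def using aut_restrict[OF aut_inv_into[OF Ma]] sw by simp
  then have g: "?g = ?M" using is_mirror_unique[OF e] by blast
  have "?M z \<in> V" using aut_in_V[OF Ma z] .
  then have "?g (?M z) = z" using aut_inv_into_left[OF Ma z] by simp
  then show ?thesis using g by simp
qed

lemma mirror_aut_Bij: "E x y \<Longrightarrow> mirror_aut V E x y \<in> Bij V"
  unfolding Bij_def using mirror_aut_extensional mirror_aut_aut aut_bij by blast

lemma theta_aut: assumes g: "graph_aut V E g" and "a \<in> V" "b \<in> V" "x \<in> V" "y \<in> V"
  shows "theta V E (g a) (g b) (g x) (g y) \<longleftrightarrow> theta V E a b x y"
  unfolding theta_def using dist_aut[OF g] assms by simp

lemma mirror_aut_conj: assumes g: "graph_aut V E g" and e: "E x y"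
  shows "mirror_aut V E (g x) (g y) = restrict (\<lambda>z. g (mirror_aut V E x y (inv_into V g z))) V"
proof -
  let ?M = "mirror_aut V E x y"
  let ?h = "restrict (\<lambda>z. g (?M (inv_into V g z))) V"
  have Ma: "graph_aut V E ?M" using mirror_aut_aut[OF e] .
  have ge: "E (g x) (g y)" using aut_adj[OF g e] .
  have ha: "graph_aut V E ?h"
    by (rule aut_cong[OF aut_comp[OF g aut_comp[OF Ma aut_inv_into[OF g]]]]) simp
  have sw: "\<forall>c w. E c w \<and> theta V E c w (g x) (g y) \<longrightarrow> ?h c = w \<and> ?h w = c"
  proof (intro allI impI)
    fix c w assume cw: "E c w \<and> theta V E c w (g x) (g y)"
    have cwV: "c \<in> V" "w \<in> V" using adj_in_V cw by blast+
    define c' where "c' = inv_into V g c"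
    define w' where "w' = inv_into V g w"
    have c'V: "c' \<in> V" "w' \<in> V" unfolding c'_def w'_def using aut_inv_into_in_V[OF g] cwV by blast+
    have gc: "g c' = c" "g w' = w" unfolding c'_def w'_def using aut_inv_into_right[OF g] cwV by blast+
    have ec: "E c' w'" using aut_adj_iff[OF g c'V] cw gc by simp
    have xyV: "x \<in> V" "y \<in> V" using adj_in_V e by blast+
    have "theta V E c' w' x y" using theta_aut[OF g c'V xyV] cw gc by simp
    then have s: "?M c' = w'" "?M w' = c'" using mirror_aut_swap[OF e ec] by blast+
    show "?h c = w \<and> ?h w = c" using cwV s gc unfolding c'_def w'_def by simp
  qed
  have "is_mirror (g x) (g y) ?h" unfolding is_mirror_def using ha sw by simp
  then show ?thesis using is_mirror_unique[OF ge] by simp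
qed

end

section \<open>Words, their action, and reduced words\<close>

lemma words_Nil[simp]: "[] \<in> words k" unfolding words_def by simp
lemma words_Cons[simp]: "i # w \<in> words k \<longleftrightarrow> i < k \<and> w \<in> words k" unfolding words_def by simp
lemma words_append[simp]: "a @ b \<in> words k \<longleftrightarrow> a \<in> words k \<and> b \<in> words k" unfolding words_def by auto
lemma words_rev[simp]: "rev w \<in> words k \<longleftrightarrow> w \<in> words k" unfolding words_def by simp
lemma words_take: "w \<in> words k \<Longrightarrow> take j w \<in> words k" unfolding words_def by (auto dest: in_set_takeD)
lemma words_drop: "w \<in> words k \<Longrightarrow> drop j w \<in> words k" unfolding words_def by (auto dest: in_set_dropD)
lemma words_nth: "w \<in> words k \<Longrightarrow> j < length w \<Longrightarrow> w ! j < k" unfolding words_def using nth_mem by blast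

lemma words_singleton: "s < k \<Longrightarrow> [s] \<in> words k"
  by simp

locale rooted_mirror_graph = mirror_graph_setting +
  fixes v :: 'a and k :: nat and nb :: "nat \<Rightarrow> 'a"
  assumes v_in_V: "v \<in> V" and nb_bij: "bij_betw nb {..<k} {u. E v u}"
begin

definition gen where "gen i = mirror_aut V E v (nb i)"
definition act where "act w = foldr (\<lambda>i f. gen i \<circ> f) w id"
definition trace where "trace w j = act (take j w) v"
definition reduced where "reduced w \<longleftrightarrow> d v (act w v) = length w"

lemma adj_nb: "i < k \<Longrightarrow> E v (nb i)" using nb_bij unfolding bij_betw_def by blast
lemma nb_surj: "E v u \<Longrightarrow> \<exists>i<k. u = nb i" using nb_bij unfolding bij_betw_def by blast
lemma nb_inj: "i < k \<Longrightarrow> j < k \<Longrightarrow> nb i = nb j \<Longrightarrow> i = j"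
  using nb_bij unfolding bij_betw_def inj_on_def by blast

lemma gen_aut: "i < k \<Longrightarrow> graph_aut V E (gen i)" unfolding gen_def using mirror_aut_aut adj_nb by blast
lemma gen_v: "i < k \<Longrightarrow> gen i v = nb i" unfolding gen_def using mirror_aut_endpoints adj_nb by blast
lemma gen_nb: "i < k \<Longrightarrow> gen i (nb i) = v" unfolding gen_def using mirror_aut_endpoints adj_nb by blast
lemma gen_gen: "i < k \<Longrightarrow> z \<in> V \<Longrightarrow> gen i (gen i z) = z" unfolding gen_def using mirror_aut_involution adj_nb by blast
lemma gen_in_V: "i < k \<Longrightarrow> z \<in> V \<Longrightarrow> gen i z \<in> V" using aut_in_V gen_aut by blast
lemma gen_extensional: "i < k \<Longrightarrow> gen i \<in> extensional V" unfolding gen_def using mirror_aut_extensional adj_nb by blast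

lemma act_Nil[simp]: "act [] = id" unfolding act_def by simp
lemma act_Cons[simp]: "act (i # w) = gen i \<circ> act w" unfolding act_def by simp
lemma act_append: "act (a @ b) = act a \<circ> act b"
  by (induction a) (simp_all add: comp_assoc)
lemma act_append_apply: "act (a @ b) z = act a (act b z)" by (simp add: act_append)

lemma act_in_V: "w \<in> words k \<Longrightarrow> z \<in> V \<Longrightarrow> act w z \<in> V"
  by (induction w) (simp_all add: gen_in_V)

lemma act_aut: "w \<in> words k \<Longrightarrow> graph_aut V E (act w)"
proof (induction w)
  case Nil show ?case unfolding act_Nil by (rule aut_id)
next
  case (Cons i w)
  have iw: "i < k" "w \<in> words k" using Cons.prems by simp_all
  have "graph_aut V E (gen i \<circ> act w)" using aut_comp[OF gen_aut[OF iw(1)] Cons.IH[OF iw(2)]] .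
  then show ?case by (simp only: act_Cons)
qed

lemma act_rev_act: "w \<in> words k \<Longrightarrow> z \<in> V \<Longrightarrow> act (rev w) (act w z) = z"
proof (induction w arbitrary: z)
  case Nil then show ?case by simp
next
  case (Cons i w)
  have "act (rev (i # w)) (act (i # w) z) = act (rev w) (gen i (gen i (act w z)))"
    by (simp add: act_append)
  also have "\<dots> = act (rev w) (act w z)" using Cons.prems gen_gen act_in_V by simp
  also have "\<dots> = z" using Cons by simp
  finally show ?case .
qed

lemma act_act_rev: "w \<in> words k \<Longrightarrow> z \<in> V \<Longrightarrow> act w (act (rev w) z) = z"
  using act_rev_act[of "rev w" z] by simp

lemma act_inj: "w \<in> words k \<Longrightarrow> x \<in> V \<Longrightarrow> y \<in> V \<Longrightarrow> act w x = act w y \<Longrightarrow> x = y"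
  using act_rev_act by metis

lemma dist_act: "w \<in> words k \<Longrightarrow> x \<in> V \<Longrightarrow> y \<in> V \<Longrightarrow> d (act w x) (act w y) = d x y"
  using dist_aut act_aut by blast

lemma trace_0[simp]: "trace w 0 = v" unfolding trace_def by simp
lemma trace_length: "trace w (length w) = act w v" unfolding trace_def by simp

lemma trace_Suc: assumes w: "w \<in> words k" and j: "j < length w" shows "trace w (Suc j) = act (take j w) (nb (w ! j))"
proof -
  have "take (Suc j) w = take j w @ [w ! j]" using j by (simp add: take_Suc_conv_app_nth)
  then show ?thesis unfolding trace_def using gen_v[OF words_nth[OF w j]] by (simp add: act_append)
qed

lemma trace_adj: assumes "w \<in> words k" "j < length w" shows "E (trace w j) (trace w (Suc j))"
proof -
  have "E v (nb (w ! j))" using adj_nb words_nth assms by blast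
  then have "E (act (take j w) v) (act (take j w) (nb (w ! j)))"
    using aut_adj act_aut words_take assms by blast
  then show ?thesis using trace_Suc[OF assms] unfolding trace_def by simp
qed

lemma trace_theta_step: assumes w: "w \<in> words k" and e: "E x y" and a: "a \<le> length w"
  and ne: "nearer x y (trace w a) \<noteq> nearer x y (act w v)"
  shows "\<exists>j. a \<le> j \<and> j < length w \<and> theta V E (trace w j) (trace w (Suc j)) x y"
proof -
  have "(\<lambda>j. nearer x y (trace w j)) a \<noteq> (\<lambda>j. nearer x y (trace w j)) (length w)" using ne trace_length by simp
  then obtain j where j: "a \<le> j" "j < length w" "nearer x y (trace w j) \<noteq> nearer x y (trace w (Suc j))"
    using exists_flip_index[OF a, of "\<lambda>j. nearer x y (trace w j)"] by blast
  have "theta V E (trace w j) (trace w (Suc j)) x y" using theta_iff_nearer[OF trace_adj[OF w j(2)] e] j(3) by blast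
  then show ?thesis using j by blast
qed

lemma mirror_aut_act:
  assumes u: "u \<in> words k" and i: "i < k" and z: "z \<in> V"
  shows "mirror_aut V E (act u v) (act u (nb i)) z = act (u @ [i] @ rev u) z"
proof -
  have "inv_into V (act u) z = act (rev u) z"
    using act_inj[OF u] aut_inv_into_right[OF act_aut[OF u] z] aut_inv_into_in_V[OF act_aut[OF u] z]
      act_act_rev[OF u z] act_in_V u z by (metis words_rev)
  then show ?thesis
    using mirror_aut_conj[OF act_aut[OF u] adj_nb[OF i]] z unfolding gen_def[symmetric]
    by (simp add: act_append)
qed

lemma mirror_trace_step:
  assumes w: "w \<in> words k" and j: "j < length w" and z: "z \<in> V"
  shows "mirror_aut V E (trace w j) (trace w (Suc j)) (act w z) = act (take j w @ drop (Suc j) w) z"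
proof -
  let ?T = "take j w" and ?i = "w ! j" and ?R = "drop (Suc j) w"
  have i: "?i < k" and T: "?T \<in> words k" and R: "?R \<in> words k"
    using words_nth words_take words_drop w j by blast+
  have act_w: "act w z = act ?T (gen ?i (act ?R z))"
    using id_take_nth_drop[OF j] by (metis act_append_apply act_Cons comp_apply append_Cons append_Nil)
  have "mirror_aut V E (trace w j) (trace w (Suc j)) (act w z) = act (?T @ [?i] @ rev ?T) (act w z)"
    using mirror_aut_act[OF T i act_in_V[OF w z]] trace_Suc[OF w j] unfolding trace_def by simp
  also have "\<dots> = act ?T (gen ?i (act (rev ?T) (act ?T (gen ?i (act ?R z)))))"
    unfolding act_w by (simp add: act_append)
  also have "\<dots> = act ?T (act ?R z)"
    using act_rev_act[OF T] gen_gen[OF i] gen_in_V[OF i] act_in_V[OF R z] by simp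
  finally show ?thesis by (simp add: act_append)
qed

text \<open>If \<open>w = s # w'\<close> fixes \<open>v\<close>, its walk must cross back over the class of the edge \<open>v nb s\<close>; the
  mirror of that crossing is \<open>gen s\<close>, so deleting \<open>s\<close> and the crossing letter leaves the action
  unchanged.\<close>
lemma act_id_if_fix_v: "w \<in> words k \<Longrightarrow> act w v = v \<Longrightarrow> z \<in> V \<Longrightarrow> act w z = z"
proof (induction "length w" arbitrary: w z rule: less_induct)
  case less
  show ?case
  proof (cases w)
    case Nil then show ?thesis by simp
  next
    case (Cons s w')
    have s: "s < k" "w' \<in> words k" using less.prems Cons by simp_all
    have len: "1 \<le> length w" using Cons by simp
    have st1: "trace w 1 = nb s" unfolding trace_def using Cons gen_v[OF s(1)] by simp
    have e: "E v (nb s)" using adj_nb[OF s(1)] .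
    have "nearer v (nb s) (trace w 1) \<noteq> nearer v (nb s) (act w v)"
      using st1 less.prems(2) dist_self[OF v_in_V] dist_self adj_in_V[OF e] dist_adj[OF e] dist_adj[OF adj_sym[OF e]]
      unfolding nearer_def by simp
    then obtain j where j: "1 \<le> j" "j < length w" "theta V E (trace w j) (trace w (Suc j)) v (nb s)"
      using trace_theta_step[OF less.prems(1) e len] by blast
    have M: "mirror_aut V E (trace w j) (trace w (Suc j)) = gen s"
      unfolding gen_def using mirror_aut_theta_eq[OF trace_adj[OF less.prems(1) j(2)] e j(3)] .
    define w3 where "w3 = take (j - 1) w' @ drop j w'"
    have w3: "take j w @ drop (Suc j) w = s # w3" unfolding w3_def using Cons j(1)
      by (cases j) simp_all
    have wd3: "w3 \<in> words k" unfolding w3_def using s(2) words_take words_drop by simp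
    have l3: "length w3 < length w" unfolding w3_def using Cons j by simp
    have key: "act w y = act w3 y" if y: "y \<in> V" for y
    proof -
      have "gen s (act w y) = gen s (act w3 y)"
        using mirror_trace_step[OF less.prems(1) j(2) y] M w3 by simp
      moreover have "act w y \<in> V" "act w3 y \<in> V" using act_in_V less.prems(1) wd3 y by blast+
      ultimately show ?thesis using gen_gen[OF s(1)] by metis
    qed
    have "act w3 v = v" using key[OF v_in_V] less.prems(2) by simp
    then have "act w3 z = z" using less.hyps[OF l3 wd3] less.prems(3) by blast
    then show ?thesis using key less.prems(3) by simp
  qed
qed

lemma act_eq_if_eq_at_v: assumes "w \<in> words k" "w' \<in> words k" "act w v = act w' v" "z \<in> V" shows "act w z = act w' z"
proof -
  have "act (rev w' @ w) v = v" using assms act_rev_act v_in_V by (simp add: act_append)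
  then have "act (rev w') (act w z) = z" using act_id_if_fix_v[of "rev w' @ w" z] assms by (simp add: act_append)
  then have "act w' (act (rev w') (act w z)) = act w' z" by simp
  then show ?thesis using act_act_rev[of w' "act w z"] act_in_V assms by simp
qed

lemma dist_act_le_length: "w \<in> words k \<Longrightarrow> d v (act w v) \<le> length w"
proof (induction w)
  case Nil then show ?case using dist_self v_in_V by simp
next
  case (Cons i w)
  have i: "i < k" "w \<in> words k" using Cons by simp_all
  have yV: "act w v \<in> V" using act_in_V i v_in_V by blast
  have "d v (gen i (act w v)) \<le> d v (gen i v) + d (gen i v) (gen i (act w v))"
    using dist_triangle v_in_V gen_in_V i yV by blast
  also have "\<dots> = 1 + d v (act w v)" using dist_aut[OF gen_aut[OF i(1)] v_in_V yV] gen_v[OF i(1)] dist_adj[OF adj_nb[OF i(1)]] by simp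
  finally show ?case using Cons by simp
qed

lemma dist_gen: assumes i: "i < k" and y: "y \<in> V" shows "d v (gen i y) = d (nb i) y"
proof -
  have "d (gen i v) (gen i (gen i y)) = d v (gen i y)" using dist_aut[OF gen_aut[OF i] v_in_V gen_in_V[OF i y]] .
  then show ?thesis using gen_v[OF i] gen_gen[OF i y] by simp
qed

lemma reduced_appendD: assumes "a \<in> words k" "b \<in> words k" "reduced (a @ b)" shows "reduced a" "reduced b"
proof -
  have aV: "act a v \<in> V" and bV: "act b v \<in> V" using act_in_V assms v_in_V by blast+
  have "d v (act (a @ b) v) \<le> d v (act a v) + d (act a v) (act a (act b v))"
    using dist_triangle v_in_V aV act_in_V assms bV by (simp add: act_append)
  also have "d (act a v) (act a (act b v)) = d v (act b v)" using dist_act assms v_in_V bV by blast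
  finally have le: "length a + length b \<le> d v (act a v) + d v (act b v)" using assms(3) unfolding reduced_def by simp
  show "reduced a" "reduced b" using le dist_act_le_length[OF assms(1)] dist_act_le_length[OF assms(2)] unfolding reduced_def by simp_all
qed

lemma geodesic_word: "u \<in> V \<Longrightarrow> \<exists>w. w \<in> words k \<and> act w v = u \<and> length w = d v u"
proof (induction "d v u" arbitrary: u)
  case 0
  then have "u = v" using dist_eq_0 v_in_V by metis
  then show ?case using dist_self[OF v_in_V] by (intro exI[of _ "[]"]) simp
next
  case (Suc n)
  obtain x where x: "E x u" "d v x = n" using dist_Suc_neighbour[OF v_in_V Suc.prems Suc.hyps(2)[symmetric]] by blast
  have xV: "x \<in> V" using adj_in_V x(1) by blast
  have "\<exists>w. w \<in> words k \<and> act w v = x \<and> length w = d v x" using Suc.hyps(1)[of x] x(2) xV by simp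
  then obtain w where w: "w \<in> words k" "act w v = x" "length w = n" using x(2) by blast
  have ga: "graph_aut V E (act (rev w))" using act_aut w(1) by simp
  have "E (act (rev w) x) (act (rev w) u)" using aut_adj[OF ga x(1)] .
  moreover have "act (rev w) x = v" using act_rev_act[OF w(1) v_in_V] w(2) by simp
  ultimately have "E v (act (rev w) u)" by simp
  then obtain i where i: "i < k" "act (rev w) u = nb i" using nb_surj by blast
  have "act (w @ [i]) v = act w (nb i)" using gen_v[OF i(1)] by (simp add: act_append)
  also have "\<dots> = u" using i(2) act_act_rev w(1) Suc.prems by metis
  finally show ?case using w i Suc.hyps(2) by (intro exI[of _ "w @ [i]"]) simp
qed

lemma exchange_mirror: assumes w: "w \<in> words k" and s: "s < k" and lt: "d v (gen s (act w v)) < d v (act w v)"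
  shows "\<exists>j<length w. mirror_aut V E (trace w j) (trace w (Suc j)) = gen s"
proof -
  have e: "E v (nb s)" using adj_nb[OF s] .
  have gV: "act w v \<in> V" using act_in_V w v_in_V by blast
  have "d (act w v) (nb s) = d v (gen s (act w v))" using dist_gen[OF s gV] dist_sym gV adj_in_V[OF e] by simp
  then have "\<not> nearer v (nb s) (act w v)" using lt dist_sym[OF gV v_in_V] unfolding nearer_def by simp
  moreover have "nearer v (nb s) (trace w 0)" unfolding nearer_def using dist_self v_in_V dist_adj[OF e] by simp
  ultimately obtain j where j: "j < length w" "theta V E (trace w j) (trace w (Suc j)) v (nb s)"
    using trace_theta_step[OF w e, of 0] by auto
  then show ?thesis using mirror_aut_theta_eq[OF trace_adj[OF w j(1)] e j(2)] unfolding gen_def by blast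
qed

lemma exchange_condition:
  assumes w: "w \<in> words k" and s: "s < k" and lt: "d v (gen s (act w v)) < d v (act w v)"
  obtains i where "i < length w" "mirror_aut V E (trace w i) (trace w (Suc i)) = gen s"
    "gen s (act w v) = act (take i w @ drop (Suc i) w) v"
proof -
  obtain i where i: "i < length w" "mirror_aut V E (trace w i) (trace w (Suc i)) = gen s"
    using exchange_mirror[OF w s lt] by blast
  moreover have "gen s (act w v) = act (take i w @ drop (Suc i) w) v"
    using mirror_trace_step[OF w i(1) v_in_V] i(2) by simp
  ultimately show ?thesis using that by blast
qed

end

section \<open>Alternating words and the Coxeter relations\<close>

fun alt :: "nat \<Rightarrow> nat \<Rightarrow> nat \<Rightarrow> nat list" where
  "alt s t 0 = []"
| "alt s t (Suc n) = s # alt t s n"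

lemma length_alt[simp]: "length (alt s t n) = n"
  by (induction n arbitrary: s t) simp_all

lemma alt_set: "set (alt s t n) \<subseteq> {s, t}"
  by (induction n arbitrary: s t) auto

lemma alt_snoc: "alt s t n @ [if even n then s else t] = alt s t (Suc n)"
proof (induction n arbitrary: s t)
  case 0 then show ?case by simp
next
  case (Suc n)
  have e: "(if even (Suc n) then s else t) = (if even n then t else s)" by simp
  have "alt s t (Suc n) @ [if even (Suc n) then s else t] = s # (alt t s n @ [if even n then t else s])"
    by (simp only: e alt.simps append_Cons)
  also have "\<dots> = s # alt t s (Suc n)" using Suc.IH[of t s] by simp
  finally show ?case by simp
qed

lemma alt_take: "j \<le> n \<Longrightarrow> take j (alt s t n) = alt s t j"
proof (induction n arbitrary: s t j)
  case 0 then show ?case by simp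
next
  case (Suc n) then show ?case by (cases j) simp_all
qed

lemma alt_nth: "j < n \<Longrightarrow> alt s t n ! j = (if even j then s else t)"
proof (induction n arbitrary: s t j)
  case 0 then show ?case by simp
next
  case (Suc n)
  show ?case
  proof (cases j)
    case 0 then show ?thesis by simp
  next
    case (Suc j')
    then have "alt s t (Suc n) ! j = alt t s n ! j'" by simp
    also have "\<dots> = (if even j' then t else s)" using Suc.IH[of j' t s] Suc.prems \<open>j = Suc j'\<close> by simp
    finally show ?thesis using \<open>j = Suc j'\<close> by simp
  qed
qed

lemma alt_palindrome: "alt t s i @ [if even i then t else s] @ rev (alt t s i) = alt t s (2 * i + 1)"
proof (induction i arbitrary: s t)
  case 0 then show ?case by simp
next
  case (Suc i)
  have eq2: "2 * Suc i + 1 = Suc (2 * i + 2)" by simp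
  have "alt t s (Suc i) @ [if even (Suc i) then t else s] @ rev (alt t s (Suc i))
      = t # (alt s t i @ [if even i then s else t] @ rev (alt s t i)) @ [t]" by simp
  also have "\<dots> = t # alt s t (2 * i + 1) @ [t]" using Suc by simp
  also have "\<dots> = alt t s (2 * i + 2) @ [t]" by simp
  also have "\<dots> = alt t s (Suc (2 * i + 2))"
  proof -
    have evn: "even (2 * i + 2)" by simp
    show ?thesis using alt_snoc[of t s "2 * i + 2"] by (simp only: if_P[OF evn])
  qed
  finally show ?case by (simp only: eq2)
qed

lemma alt_double: "alt s t (2 * n) = concat (replicate n [s, t])"
  by (induction n) simp_all

lemma alt_append: "alt s t a @ (if even a then alt s t b else alt t s b) = alt s t (a + b)"
proof (induction a arbitrary: s t)
  case 0 then show ?case by simp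
next
  case (Suc a)
  have "alt s t (Suc a) @ (if even (Suc a) then alt s t b else alt t s b)
     = s # (alt t s a @ (if even a then alt t s b else alt s t b))" by simp
  also have "\<dots> = s # alt t s (a + b)" using Suc by simp
  finally show ?case by simp
qed

lemma alt_rev: "rev (alt t s n) = (if even n then alt s t n else alt t s n)"
proof (induction n arbitrary: s t)
  case 0 then show ?case by simp
next
  case (Suc n)
  have "rev (alt t s (Suc n)) = rev (alt s t n) @ [t]" by simp
  also have "\<dots> = (if even n then alt t s n else alt s t n) @ [t]" using Suc by simp
  also have "\<dots> = (if even (Suc n) then alt s t (Suc n) else alt t s (Suc n))"
    using alt_snoc[of t s n] alt_snoc[of s t n] by auto
  finally show ?case .
qed

lemma alt_append_rev: "alt s t m @ rev (alt t s m) = alt s t (2 * m)"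
  using alt_append[of s t m m] alt_rev[of t s m] by (cases "even m") (simp_all add: mult_2)

lemma alt_words: "s < k \<Longrightarrow> t < k \<Longrightarrow> alt s t n \<in> words k"
  using alt_set[of s t n] unfolding words_def by auto

lemma set_relator: "set (concat (replicate n [i, j])) \<subseteq> {i, j}"
  by (induction n) auto

lemma cox_eq_words: "cox_eq m k u w \<Longrightarrow> u \<in> words k \<and> w \<in> words k"
proof (induction rule: cox_eq.induct)
  case (rel u v i j)
  have "set (concat (replicate (m i j) [i, j])) \<subseteq> {i, j}" by (rule set_relator)
  then have "set (concat (replicate (m i j) [i, j])) \<subseteq> {..<k}" using rel.hyps(3,4) by auto
  then show ?case using rel.hyps(1,2) unfolding words_def by simp
next
  case (refl w) then show ?case by simp
next
  case (sym u w) then show ?case by simp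
next
  case (trans u v w) then show ?case by simp
qed

lemma cox_eq_append_left: "cox_eq m k a b \<Longrightarrow> u \<in> words k \<Longrightarrow> cox_eq m k (u @ a) (u @ b)"
proof (induction rule: cox_eq.induct)
  case (refl w)
  then have "u @ w \<in> words k" unfolding words_def by auto
  then show ?case by (rule cox_eq.refl)
next
  case (sym a b) then show ?case using cox_eq.sym by blast
next
  case (trans a b c) then show ?case using cox_eq.trans by blast
next
  case (rel u0 v0 i j)
  have "u @ u0 \<in> words k" using rel unfolding words_def by auto
  then have "cox_eq m k ((u @ u0) @ concat (replicate (m i j) [i, j]) @ v0) ((u @ u0) @ v0)"
    using rel by (intro cox_eq.rel) auto
  then show ?case by simp
qed

lemma cox_eq_append_right: "cox_eq m k a b \<Longrightarrow> u \<in> words k \<Longrightarrow> cox_eq m k (a @ u) (b @ u)"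
proof (induction rule: cox_eq.induct)
  case (refl w)
  then have "w @ u \<in> words k" unfolding words_def by auto
  then show ?case by (rule cox_eq.refl)
next
  case (sym a b) then show ?case using cox_eq.sym by blast
next
  case (trans a b c) then show ?case using cox_eq.trans by blast
next
  case (rel u0 v0 i j)
  have "v0 @ u \<in> words k" using rel unfolding words_def by auto
  then have "cox_eq m k (u0 @ concat (replicate (m i j) [i, j]) @ (v0 @ u)) (u0 @ (v0 @ u))"
    using rel by (intro cox_eq.rel) auto
  then show ?case by simp
qed

lemma cox_eq_append: "cox_eq m k a x \<Longrightarrow> cox_eq m k b y \<Longrightarrow> cox_eq m k (a @ b) (x @ y)"
  using cox_eq_append_right[of m k a x b] cox_eq_append_left[of m k b y x] cox_eq_words cox_eq.trans
  by metis

lemma cox_rel_Image: "cox_rel m k `` {w} = {u. cox_eq m k w u}"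
  unfolding cox_rel_def by simp

lemma cox_rel_equiv: "equiv (words k) (cox_rel m k)"
proof (rule equivI)
  show "cox_rel m k \<subseteq> words k \<times> words k"
    unfolding cox_rel_def using cox_eq_words by blast
  show "refl_on (words k) (cox_rel m k)"
    unfolding refl_on_def cox_rel_def using cox_eq_words cox_eq.refl by blast
  show "sym (cox_rel m k)" unfolding sym_def cox_rel_def using cox_eq.sym by blast
  show "trans (cox_rel m k)" unfolding trans_def cox_rel_def using cox_eq.trans by blast
qed

lemma carrier_presented_group: "carrier (presented_group m k) = words k // cox_rel m k"
  unfolding presented_group_def by simp

lemma presented_group_mult_class:
  assumes "a \<in> words k" "b \<in> words k"
  shows "cox_rel m k `` {a} \<otimes>\<^bsub>presented_group m k\<^esub> cox_rel m k `` {b} = cox_rel m k `` {a @ b}"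
proof -
  have "cox_eq m k (a @ b) z" if "cox_eq m k a x" "cox_eq m k b y" "cox_eq m k (x @ y) z" for x y z
    using cox_eq_append[OF that(1,2)] that(3) cox_eq.trans by blast
  moreover have "cox_eq m k a a" "cox_eq m k b b" using assms cox_eq.refl by blast+
  ultimately show ?thesis unfolding presented_group_def cox_rel_Image by auto
qed

context rooted_mirror_graph begin

abbreviation Mir where "Mir \<equiv> mirror_group V E"
definition elem where "elem w = restrict (act w) V"

lemma group_Mir: "group Mir"
  unfolding mirror_group_def by (rule group.group_subgroup_generated[OF group_BijGroup])

lemma carrier_Mir: "carrier Mir = generate (BijGroup V) (Bij V \<inter> mirror_auts V E)"
  unfolding mirror_group_def carrier_subgroup_generated by (simp add: BijGroup_def)

lemma mult_Mir: "x \<in> Bij V \<Longrightarrow> y \<in> Bij V \<Longrightarrow> x \<otimes>\<^bsub>Mir\<^esub> y = compose V x y"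
  unfolding mirror_group_def mult_subgroup_generated by (simp add: BijGroup_def)

lemma one_Mir: "\<one>\<^bsub>Mir\<^esub> = (\<lambda>x\<in>V. x)"
  unfolding mirror_group_def one_subgroup_generated by (simp add: BijGroup_def)

lemma carrier_Mir_Bij: "carrier Mir \<subseteq> Bij V"
  using group.carrier_subgroup_generated_subset[OF group_BijGroup]
  unfolding mirror_group_def by (simp add: BijGroup_def)

lemma elem_Bij: assumes "w \<in> words k" shows "elem w \<in> Bij V"
proof -
  have "bij_betw (act w) V V" using aut_bij act_aut assms by blast
  then have "bij_betw (elem w) V V" unfolding elem_def by (rule bij_betw_cong[THEN iffD1, rotated]) simp
  then show ?thesis unfolding Bij_def elem_def by simp
qed

lemma elem_mult: assumes "a \<in> words k" "b \<in> words k" shows "elem a \<otimes>\<^bsub>Mir\<^esub> elem b = elem (a @ b)"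
proof -
  have "compose V (elem a) (elem b) = elem (a @ b)"
    unfolding compose_def elem_def by (rule restrict_ext) (simp add: act_append act_in_V assms)
  then show ?thesis using mult_Mir elem_Bij assms by simp
qed

lemma elem_Nil: "elem [] = \<one>\<^bsub>Mir\<^esub>" unfolding elem_def one_Mir by (simp add: id_def)

lemma elem_single: assumes "i < k" shows "elem [i] = gen i"
proof -
  have "elem [i] = restrict (gen i) V" unfolding elem_def by simp
  then show ?thesis using extensional_restrict[OF gen_extensional[OF assms]] by simp
qed

lemma gen_generator: assumes "i < k" shows "gen i \<in> Bij V \<inter> mirror_auts V E"
proof -
  have "gen i \<in> Bij V" unfolding gen_def using mirror_aut_Bij adj_nb assms by blast
  moreover have "gen i \<in> mirror_auts V E" unfolding gen_def mirror_auts_def using adj_nb assms by blast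
  ultimately show ?thesis by blast
qed

lemma elem_carrier: "w \<in> words k \<Longrightarrow> elem w \<in> carrier Mir"
proof (induction w)
  case Nil then show ?case using elem_Nil monoid.one_closed[OF group.is_monoid[OF group_Mir]] by simp
next
  case (Cons i w)
  have iw: "i < k" "w \<in> words k" using Cons.prems by simp_all
  have "gen i \<in> carrier Mir" unfolding carrier_Mir using generate.incl[OF gen_generator[OF iw(1)]] .
  then have "elem [i] \<otimes>\<^bsub>Mir\<^esub> elem w \<in> carrier Mir"
    using elem_single[OF iw(1)] Cons.IH[OF iw(2)] monoid.m_closed[OF group.is_monoid[OF group_Mir]] by simp
  then show ?case using elem_mult[of "[i]" w] iw by simp
qed

lemma gen_carrier: "i < k \<Longrightarrow> gen i \<in> carrier Mir"
  using elem_carrier[of "[i]"] elem_single by simp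

lemma elem_eq_iff: "elem a = elem b \<longleftrightarrow> (\<forall>z\<in>V. act a z = act b z)"
  unfolding elem_def by (metis restrict_apply' restrict_ext)

lemma pow_elem: assumes "s < k" "t < k"
  shows "(gen s \<otimes>\<^bsub>Mir\<^esub> gen t) [^]\<^bsub>Mir\<^esub> n = elem (concat (replicate n [s, t]))"
proof (induction n)
  case 0 then show ?case using elem_Nil by simp
next
  case (Suc n)
  have st: "gen s \<otimes>\<^bsub>Mir\<^esub> gen t = elem [s, t]" using elem_mult[of "[s]" "[t]"] elem_single assms by simp
  have c: "gen s \<otimes>\<^bsub>Mir\<^esub> gen t \<in> carrier Mir" using st elem_carrier assms by simp
  have "(gen s \<otimes>\<^bsub>Mir\<^esub> gen t) [^]\<^bsub>Mir\<^esub> Suc n = (gen s \<otimes>\<^bsub>Mir\<^esub> gen t) \<otimes>\<^bsub>Mir\<^esub> (gen s \<otimes>\<^bsub>Mir\<^esub> gen t) [^]\<^bsub>Mir\<^esub> n"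
    using monoid.nat_pow_Suc2[OF group.is_monoid[OF group_Mir] c] .
  also have "\<dots> = elem ([s, t] @ concat (replicate n [s, t]))"
    using Suc st elem_mult assms set_concat by (simp add: words_def)
  finally show ?case by simp
qed

definition cox_m where "cox_m i j = (if i = j then 1 else group.ord Mir (gen i \<otimes>\<^bsub>Mir\<^esub> gen j))"

lemma finite_Mir: "finite (carrier Mir)"
proof -
  have s1: "Bij V \<subseteq> (\<Pi>\<^sub>E i\<in>V. V)" unfolding Bij_def by (auto simp: bij_betw_def extensional_def)
  have f: "finite (\<Pi>\<^sub>E i\<in>V. V)" by (rule finite_PiE) (rule finite_V)+
  have "carrier Mir \<subseteq> (\<Pi>\<^sub>E i\<in>V. V)" using carrier_Mir_Bij s1 by (rule subset_trans)
  then show ?thesis using f by (rule finite_subset)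
qed

lemma gen_mult_carrier: "s < k \<Longrightarrow> t < k \<Longrightarrow> gen s \<otimes>\<^bsub>Mir\<^esub> gen t \<in> carrier Mir"
  using monoid.m_closed[OF group.is_monoid[OF group_Mir]] gen_carrier by blast

lemma cox_m_pos: "s < k \<Longrightarrow> t < k \<Longrightarrow> 1 \<le> cox_m s t"
  unfolding cox_m_def using group.ord_ge_1[OF group_Mir finite_Mir gen_mult_carrier] by simp

lemma cox_m_dvd_iff: assumes "s < k" "t < k" "s \<noteq> t"
  shows "elem (concat (replicate n [s, t])) = \<one>\<^bsub>Mir\<^esub> \<longleftrightarrow> cox_m s t dvd n"
  using group.pow_eq_id[OF group_Mir gen_mult_carrier[OF assms(1,2)], of n] pow_elem[OF assms(1,2)] assms(3)
  unfolding cox_m_def by simp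

lemma cox_m_relator_act: assumes "s < k" "t < k" "z \<in> V"
  shows "act (concat (replicate (cox_m s t) [s, t])) z = z"
proof (cases "s = t")
  case True then show ?thesis unfolding cox_m_def using gen_gen assms by simp
next
  case False
  have "elem (concat (replicate (cox_m s t) [s, t])) = \<one>\<^bsub>Mir\<^esub>" using cox_m_dvd_iff[OF assms(1,2) False] by simp
  then show ?thesis using assms(3) unfolding elem_def one_Mir by (metis restrict_apply')
qed

lemma gen_mult_self: assumes i: "i < k" shows "gen i \<otimes>\<^bsub>Mir\<^esub> gen i = \<one>\<^bsub>Mir\<^esub>"
proof -
  have "elem [i,i] = elem []" unfolding elem_eq_iff using gen_gen[OF i] by simp
  moreover have "gen i \<otimes>\<^bsub>Mir\<^esub> gen i = elem [i,i]" using elem_mult[of "[i]" "[i]"] elem_single[OF i] i by simp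
  ultimately show ?thesis using elem_Nil by simp
qed

lemma cox_m_sym: assumes "s < k" "t < k" shows "cox_m s t = cox_m t s"
proof (cases "s = t")
  case True then show ?thesis by simp
next
  case False
  have G: "group Mir" by (rule group_Mir)
  have c: "gen s \<in> carrier Mir" "gen t \<in> carrier Mir" using gen_carrier assms by blast+
  have iv: "inv\<^bsub>Mir\<^esub> (gen s) = gen s" "inv\<^bsub>Mir\<^esub> (gen t) = gen t"
    using group.inv_equality[OF G gen_mult_self] c assms by blast+
  have "inv\<^bsub>Mir\<^esub> (gen s \<otimes>\<^bsub>Mir\<^esub> gen t) = gen t \<otimes>\<^bsub>Mir\<^esub> gen s"
    using group.inv_mult_group[OF G c] iv by simp
  then have "group.ord Mir (gen t \<otimes>\<^bsub>Mir\<^esub> gen s) = group.ord Mir (gen s \<otimes>\<^bsub>Mir\<^esub> gen t)"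
    using group.ord_inv[OF G gen_mult_carrier[OF assms]] by simp
  then show ?thesis unfolding cox_m_def using False by simp
qed

text \<open>The mirror of the \<open>i\<close>-th edge on the walk of \<open>t s t \<dots>\<close> is the palindrome \<open>alt t s (2 i + 1)\<close>;
  were it \<open>gen s\<close>, then \<open>(s t)\<^sup>i\<^sup>+\<^sup>1\<close> would act trivially.\<close>
lemma mirror_trace_alt_ne_gen:
  assumes st: "s < k" "t < k" "s \<noteq> t" and i: "i < N" "Suc i < cox_m s t"
  shows "mirror_aut V E (trace (alt t s N) i) (trace (alt t s N) (Suc i)) \<noteq> gen s"
proof
  assume eq: "mirror_aut V E (trace (alt t s N) i) (trace (alt t s N) (Suc i)) = gen s"
  let ?w = "alt t s N" and ?x = "alt t s N ! i"
  have w: "?w \<in> words k" "alt t s i \<in> words k" using alt_words st by blast+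
  have x: "?x < k" using words_nth[OF w(1)] i by simp
  have "take i ?w = alt t s i" using alt_take i by simp
  then have tr: "trace ?w i = act (alt t s i) v" "trace ?w (Suc i) = act (alt t s i) (nb ?x)"
    using trace_Suc[OF w(1)] i unfolding trace_def by simp_all
  have "?x = (if even i then t else s)" using alt_nth i by simp
  then have pal: "alt t s i @ [?x] @ rev (alt t s i) = alt t s (2 * i + 1)" using alt_palindrome by simp
  have idz: "act (alt s t (2 * (Suc i))) z = z" if z: "z \<in> V" for z
  proof -
    have "gen s z = act (alt t s (2 * i + 1)) z"
      using fun_cong[OF eq, of z] mirror_aut_act[OF w(2) x z] tr pal by simp
    then have "gen s (gen s z) = gen s (act (alt t s (2 * i + 1)) z)" by simp
    then show ?thesis using gen_gen st z by simp
  qed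
  have "elem (concat (replicate (Suc i) [s, t])) = \<one>\<^bsub>Mir\<^esub>"
    using idz unfolding elem_def one_Mir alt_double[symmetric] by (intro restrict_ext) simp
  then have "cox_m s t dvd Suc i" using cox_m_dvd_iff st by blast
  then show False using i(2) by (simp add: nat_dvd_not_less)
qed

lemma braid_act: assumes "s < k" "t < k" "s \<noteq> t" "z \<in> V"
  shows "act (alt s t (cox_m s t)) z = act (alt t s (cox_m s t)) z"
proof -
  let ?m = "cox_m s t"
  have y: "act (alt t s ?m) z \<in> V" using act_in_V alt_words assms by blast
  have "act (alt s t (2 * ?m)) (act (alt t s ?m) z) = act (alt t s ?m) z"
    using cox_m_relator_act[OF assms(1,2) y] alt_double by simp
  moreover have "act (alt s t (2 * ?m)) y = act (alt s t ?m) (act (rev (alt t s ?m)) y)" for y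
    by (simp only: alt_append_rev[symmetric] act_append_apply)
  ultimately have "act (alt s t ?m) (act (rev (alt t s ?m)) (act (alt t s ?m) z)) = act (alt t s ?m) z"
    by simp
  then show ?thesis using act_rev_act alt_words assms by simp
qed

abbreviation cox_equiv (infix "\<asymp>" 50) where "u \<asymp> w \<equiv> cox_eq cox_m k u w"

lemmas cox_equiv_trans[trans] = cox_eq.trans[of cox_m k]

lemma cox_equiv_refl: "w \<in> words k \<Longrightarrow> w \<asymp> w" using cox_eq.refl by blast

lemma cox_equiv_pair: assumes "u \<in> words k" "w \<in> words k" "i < k" shows "u @ [i, i] @ w \<asymp> u @ w"
proof -
  have "u @ concat (replicate (cox_m i i) [i, i]) @ w \<asymp> u @ w"
    using assms by (intro cox_eq.rel) auto
  then show ?thesis unfolding cox_m_def by simp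
qed

lemma cox_equiv_rev_cancel: "w \<in> words k \<Longrightarrow> rev w @ w \<asymp> []"
proof (induction w)
  case Nil then show ?case using cox_equiv_refl by simp
next
  case (Cons i w)
  have iw: "i < k" "w \<in> words k" using Cons.prems by simp_all
  have "rev w @ [i, i] @ w \<asymp> rev w @ w" using cox_equiv_pair iw by simp
  then have "rev (i # w) @ (i # w) \<asymp> rev w @ w" by simp
  then show ?case using Cons.IH[OF iw(2)] cox_eq.trans by blast
qed

lemma cox_equiv_braid:
  assumes st: "s < k" "t < k" "s \<noteq> t"
  shows "alt s t (cox_m s t) \<asymp> alt t s (cox_m s t)"
proof -
  let ?m = "cox_m s t"
  have w: "alt s t ?m \<in> words k" "alt t s ?m \<in> words k" using alt_words st by blast+
  have "alt s t ?m @ rev (alt t s ?m) @ alt t s ?m \<asymp> alt s t ?m @ []"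
    using cox_eq_append_left[OF cox_equiv_rev_cancel[OF w(2)] w(1)] .
  then have "alt s t ?m \<asymp> (alt s t ?m @ rev (alt t s ?m)) @ alt t s ?m" using cox_eq.sym by simp
  also have "\<dots> = [] @ concat (replicate ?m [s, t]) @ alt t s ?m"
    using alt_append_rev[of s t ?m] alt_double[of s t ?m] by simp
  also have "\<dots> \<asymp> [] @ alt t s ?m" using st w(2) by (intro cox_eq.rel) auto
  finally show ?thesis by simp
qed

lemma act_eq_if_cox_eq: "a \<asymp> b \<Longrightarrow> z \<in> V \<Longrightarrow> act a z = act b z"
proof (induction arbitrary: z rule: cox_eq.induct)
  case (rel u w i j)
  have wV: "act w z \<in> V" using act_in_V rel by blast
  have "act (concat (replicate (cox_m i j) [i, j])) (act w z) = act w z" using cox_m_relator_act rel wV by blast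
  then show ?case by (simp add: act_append)
qed auto

section \<open>Matsumoto's theorem for reduced words\<close>

definition reduced_pair where
  "reduced_pair w w' \<longleftrightarrow> w \<in> words k \<and> w' \<in> words k \<and> reduced w \<and> reduced w' \<and> act w v = act w' v"

definition reduced_equiv_below where
  "reduced_equiv_below n \<longleftrightarrow> (\<forall>w w'. length w < n \<longrightarrow> reduced_pair w w' \<longrightarrow> w \<asymp> w')"

lemma reduced_pair_length: "reduced_pair w w' \<Longrightarrow> length w = length w'"
  unfolding reduced_pair_def reduced_def by metis

lemma reduced_pair_sym: "reduced_pair w w' \<Longrightarrow> reduced_pair w' w"
  unfolding reduced_pair_def by simp

lemma reduced_pair_trans: "reduced_pair w w' \<Longrightarrow> reduced_pair w' w'' \<Longrightarrow> reduced_pair w w''"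
  unfolding reduced_pair_def by simp

lemma reduced_pair_Cons: assumes "reduced_pair (s # a) (s # b)" shows "reduced_pair a b"
proof -
  have ab: "s < k" "a \<in> words k" "b \<in> words k" using assms unfolding reduced_pair_def by simp_all
  have "gen s (act a v) = gen s (act b v)" using assms unfolding reduced_pair_def by simp
  then have "act a v = act b v" using gen_gen[OF ab(1)] act_in_V ab v_in_V by metis
  moreover have "reduced a" "reduced b"
    using reduced_appendD(2)[of "[s]" a] reduced_appendD(2)[of "[s]" b] assms ab
    unfolding reduced_pair_def by simp_all
  ultimately show ?thesis using ab unfolding reduced_pair_def by simp
qed

lemma reduced_pair_append_left:
  assumes "reduced_pair (u @ a) (u @ b)" shows "reduced_pair a b"
  using assms by (induction u) (simp_all add: reduced_pair_Cons)

lemma alt_Suc_cox_m_not_reduced: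
  assumes st: "s < k" "t < k" "s \<noteq> t" shows "\<not> reduced (alt s t (Suc (cox_m s t)))"
proof
  assume r: "reduced (alt s t (Suc (cox_m s t)))"
  let ?m = "cox_m s t"
  obtain m' where m': "?m = Suc m'" using cox_m_pos[OF st(1,2)] by (cases ?m) auto
  have "act (alt t s ?m) v = act (alt s t ?m) v" using braid_act[OF st v_in_V] by simp
  then have "act (alt s t (Suc ?m)) v = gen s (gen s (act (alt t s m') v))" using m' by simp
  also have "\<dots> = act (alt t s m') v" using gen_gen st act_in_V alt_words v_in_V by simp
  finally have "d v (act (alt s t (Suc ?m)) v) \<le> m'"
    using dist_act_le_length[OF alt_words[OF st(2,1)], of m'] by simp
  then show False using r m' unfolding reduced_def by simp
qed

lemma alt_prefix_le_cox_m:
  assumes st: "s < k" "t < k" "s \<noteq> t" and r: "reduced (alt s t j @ x)" "x \<in> words k"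
  shows "j \<le> cox_m s t"
proof (rule ccontr)
  let ?m = "cox_m s t"
  assume "\<not> j \<le> ?m"
  then have "alt s t j @ x = alt s t (Suc ?m) @ drop (Suc ?m) (alt s t j) @ x"
    using alt_take[of "Suc ?m" j s t] by (metis append.assoc append_take_drop_id not_less_eq_eq)
  then have "reduced (alt s t (Suc ?m))"
    using reduced_appendD(1) r alt_words st words_drop by (metis words_append)
  then show False using alt_Suc_cox_m_not_reduced st by blast
qed

text \<open>By \<open>mirror_trace_alt_ne_gen\<close>, the letter deleted by the exchange condition lies in \<open>y\<close>.\<close>
lemma exchange_in_tail:
  assumes st: "s < k" "t < k" "s \<noteq> t" and j: "j < cox_m s t" and Y: "alt t s j @ y \<in> words k"
    and lt: "d v (gen s (act (alt t s j @ y) v)) < d v (act (alt t s j @ y) v)"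
  obtains y' where "y' \<in> words k" "Suc (length y') = length y"
    "gen s (act (alt t s j @ y) v) = act (alt t s j @ y') v"
proof -
  let ?Y = "alt t s j @ y"
  obtain i where i: "i < length ?Y" "mirror_aut V E (trace ?Y i) (trace ?Y (Suc i)) = gen s"
    "gen s (act ?Y v) = act (take i ?Y @ drop (Suc i) ?Y) v"
    using exchange_condition[OF Y st(1) lt] by blast
  have ij: "j \<le> i"
  proof (rule ccontr)
    assume "\<not> j \<le> i"
    then have ij: "i < j" "Suc i < cox_m s t" using j by simp_all
    then have "trace ?Y i = trace (alt t s j) i" "trace ?Y (Suc i) = trace (alt t s j) (Suc i)"
      unfolding trace_def by simp_all
    then show False using mirror_trace_alt_ne_gen[OF st ij] i(2) by simp
  qed
  define y' where "y' = take (i - j) y @ drop (Suc (i - j)) y"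
  have "take i ?Y @ drop (Suc i) ?Y = alt t s j @ y'"
    unfolding y'_def using ij by (simp add: Suc_diff_le)
  moreover have "y' \<in> words k" unfolding y'_def using Y words_take words_drop by simp
  moreover have "Suc (length y') = length y" unfolding y'_def using i(1) ij by simp
  ultimately show ?thesis using that i(3) by simp
qed

lemma exchange_step:
  assumes IH: "reduced_equiv_below n" and st: "s < k" "t < k" "s \<noteq> t" and j: "1 \<le> j" "j < cox_m s t"
    and XY: "reduced_pair (alt s t j @ x) (alt t s j @ y)" and n: "length (alt s t j @ x) = n"
  shows "\<exists>y'. reduced_pair (alt s t j @ x) (alt s t (Suc j) @ y') \<and> alt s t j @ x \<asymp> alt s t (Suc j) @ y'"
proof -
  obtain j' where j': "j = Suc j'" using j(1) by (cases j) auto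
  let ?X = "alt s t j @ x" and ?Y = "alt t s j @ y" and ?X' = "alt t s j' @ x"
  have X: "?X = s # ?X'" using j' by simp
  have w: "?X \<in> words k" "?Y \<in> words k" "?X' \<in> words k"
    using XY X unfolding reduced_pair_def by auto
  have YV: "act ?Y v \<in> V" using act_in_V w v_in_V by blast
  have "act ?X v = gen s (act ?X' v)" using X by simp
  then have "gen s (act ?Y v) = gen s (gen s (act ?X' v))" using XY unfolding reduced_pair_def by simp
  then have sY: "gen s (act ?Y v) = act ?X' v" using gen_gen[OF st(1) act_in_V[OF w(3) v_in_V]] by simp
  have "d v (act ?Y v) = n"
    using XY n reduced_pair_length[OF XY] unfolding reduced_pair_def reduced_def by simp
  moreover have "d v (act ?X' v) < n" using dist_act_le_length[OF w(3)] n j' by simp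
  ultimately have "d v (gen s (act ?Y v)) < d v (act ?Y v)" using sY by simp
  then obtain y' where y': "y' \<in> words k" "Suc (length y') = length y"
    "gen s (act ?Y v) = act (alt t s j @ y') v"
    using exchange_in_tail[OF st j(2) w(2)] by blast
  let ?Z = "alt s t (Suc j) @ y'"
  have Z: "?Z = s # alt t s j @ y'" by simp
  have "act ?Z v = act ?Y v" using Z y'(3) gen_gen[OF st(1) YV] by simp
  moreover have "length ?Z = length ?Y" using y'(2) by simp
  ultimately have XZ: "reduced_pair ?X ?Z"
    using XY reduced_pair_length[OF XY] y'(1) st alt_words unfolding reduced_pair_def reduced_def by simp
  then have "reduced_pair ?X' (alt t s j @ y')" using reduced_pair_Cons[of s ?X' "alt t s j @ y'"] X by simp
  moreover have "length ?X' < n" using n j' by simp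
  ultimately have "?X' \<asymp> alt t s j @ y'" using IH unfolding reduced_equiv_below_def by blast
  then have "?X \<asymp> ?Z" using X Z cox_eq_append_left[of cox_m k _ _ "[s]"] st(1) by simp
  then show ?thesis using XZ by blast
qed

lemma braid_prefix_equiv:
  assumes IH: "reduced_equiv_below n" and st: "s < k" "t < k" "s \<noteq> t"
    and XY: "reduced_pair (alt s t (cox_m s t) @ x) (alt t s (cox_m s t) @ y)"
    and n: "length (alt s t (cox_m s t) @ x) = n"
  shows "alt s t (cox_m s t) @ x \<asymp> alt t s (cox_m s t) @ y"
proof -
  let ?m = "cox_m s t"
  have w: "x \<in> words k" "y \<in> words k" using XY unfolding reduced_pair_def by simp_all
  have "act (alt s t ?m @ y) v = act (alt t s ?m @ y) v"
    using braid_act[OF st act_in_V[OF w(2) v_in_V]] by (simp add: act_append)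
  then have "reduced_pair (alt s t ?m @ x) (alt s t ?m @ y)"
    using XY reduced_pair_length[OF XY] w alt_words st unfolding reduced_pair_def reduced_def by simp
  then have "reduced_pair x y" using reduced_pair_append_left by blast
  moreover have "length x < n" using n cox_m_pos[OF st(1,2)] by simp
  ultimately have "x \<asymp> y" using IH unfolding reduced_equiv_below_def by blast
  then have "alt s t ?m @ x \<asymp> alt s t ?m @ y" using cox_eq_append_left alt_words st by blast
  also have "\<dots> \<asymp> alt t s ?m @ y" using cox_eq_append_right[OF cox_equiv_braid[OF st] w(2)] .
  finally show ?thesis .
qed

text \<open>Exchange steps lengthen the alternating prefixes until they reach length \<open>m(s,t)\<close>, where the
  braid relation applies.\<close>
lemma alternating_prefix_equiv:
  assumes IH: "reduced_equiv_below n" and st: "s < k" "t < k" "s \<noteq> t"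
  shows "1 \<le> j \<Longrightarrow> reduced_pair (alt s t j @ x) (alt t s j @ y) \<Longrightarrow> length (alt s t j @ x) = n
    \<Longrightarrow> alt s t j @ x \<asymp> alt t s j @ y"
proof (induction "n - j" arbitrary: j x y rule: less_induct)
  case less
  let ?m = "cox_m s t"
  have "x \<in> words k" using less.prems(2) unfolding reduced_pair_def by simp
  then have "j \<le> ?m" using alt_prefix_le_cox_m[OF st] less.prems(2) unfolding reduced_pair_def by blast
  show ?case
  proof (cases "j = ?m")
    case True
    then show ?thesis using braid_prefix_equiv[OF IH st] less.prems(2,3) by simp
  next
    case False
    then have jlt: "j < ?m" "j < cox_m t s" using \<open>j \<le> ?m\<close> cox_m_sym st by simp_all
    obtain y1 where y1: "reduced_pair (alt s t j @ x) (alt s t (Suc j) @ y1)"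
        "alt s t j @ x \<asymp> alt s t (Suc j) @ y1"
      using exchange_step[OF IH st less.prems(1) jlt(1) less.prems(2,3)] by blast
    have "length (alt t s j @ y) = n" using less.prems(2,3) reduced_pair_length by metis
    then obtain x1 where x1: "reduced_pair (alt t s j @ y) (alt t s (Suc j) @ x1)"
        "alt t s j @ y \<asymp> alt t s (Suc j) @ x1"
      using exchange_step[where s = t and t = s and x = y and y = x] IH st less.prems(1) jlt(2)
        reduced_pair_sym[OF less.prems(2)] by blast
    have "reduced_pair (alt s t (Suc j) @ y1) (alt t s (Suc j) @ x1)"
      using y1(1) x1(1) less.prems(2) reduced_pair_sym reduced_pair_trans by metis
    moreover have len1: "length (alt s t (Suc j) @ y1) = n"
      using y1(1) less.prems(3) reduced_pair_length by metis
    moreover have "n - Suc j < n - j" using len1 by simp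
    ultimately have "alt s t (Suc j) @ y1 \<asymp> alt t s (Suc j) @ x1"
      using less.hyps[of "Suc j" y1 x1] by simp
    then show ?thesis using y1(2) x1(2) cox_eq.trans cox_eq.sym by meson
  qed
qed

lemma reduced_equiv_below_Suc:
  assumes IH: "reduced_equiv_below n" shows "reduced_equiv_below (Suc n)"
  unfolding reduced_equiv_below_def
proof (intro allI impI)
  fix w w' assume "length w < Suc n" and pair: "reduced_pair w w'"
  show "w \<asymp> w'"
  proof (cases "length w < n")
    case True
    then show ?thesis using IH pair unfolding reduced_equiv_below_def by blast
  next
    case False
    then have n: "length w = n" using \<open>length w < Suc n\<close> by simp
    show ?thesis
    proof (cases w)
      case Nil
      then have "w' = []" using reduced_pair_length[OF pair] by simp
      then show ?thesis using Nil cox_equiv_refl by simp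
    next
      case (Cons s a)
      then obtain t b where w': "w' = t # b" using reduced_pair_length[OF pair] by (cases w') auto
      have st: "s < k" "t < k" using pair Cons w' unfolding reduced_pair_def by simp_all
      show ?thesis
      proof (cases "s = t")
        case True
        then have "reduced_pair a b" using pair reduced_pair_Cons[of s a b] Cons w' by simp
        moreover have "length a < n" using n Cons by simp
        ultimately have "a \<asymp> b" using IH unfolding reduced_equiv_below_def by blast
        then show ?thesis using Cons w' True cox_eq_append_left[of cox_m k a b "[s]"] st by simp
      next
        case False
        then show ?thesis
          using alternating_prefix_equiv[OF IH st False, where j = 1 and x = a and y = b] pair n Cons w'
          by simp
      qed
    qed
  qed
qed

lemma reduced_pair_cox_eq: "reduced_pair w w' \<Longrightarrow> w \<asymp> w'"
proof -
  have "reduced_equiv_below n" for n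
  proof (induction n)
    case 0
    show ?case unfolding reduced_equiv_below_def by simp
  qed (rule reduced_equiv_below_Suc)
  then show "reduced_pair w w' \<Longrightarrow> w \<asymp> w'" unfolding reduced_equiv_below_def by blast
qed

lemma reduce_snoc:
  assumes w: "w \<in> words k" "reduced w" and s: "s < k" and nr: "\<not> reduced (w @ [s])"
  shows "\<exists>u. u \<in> words k \<and> reduced u \<and> act u v = act (w @ [s]) v \<and> w @ [s] \<asymp> u"
proof -
  let ?u0 = "act (w @ [s]) v"
  have u0: "?u0 = act w (nb s)" using gen_v s by (simp add: act_append)
  have e: "E (act w v) ?u0" using aut_adj[OF act_aut[OF w(1)] adj_nb[OF s]] u0 by simp
  have L: "d v (act w v) = length w" using w(2) unfolding reduced_def .
  have "d v ?u0 = Suc (d v (act w v)) \<or> d v (act w v) = Suc (d v ?u0)" using dist_adj_cases[OF e v_in_V] .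
  moreover have "d v ?u0 \<noteq> Suc (length w)" using nr unfolding reduced_def by simp
  ultimately have Lu: "length w = Suc (d v ?u0)" using L by simp
  have u0V: "?u0 \<in> V" using act_in_V w(1) s v_in_V by simp
  obtain u where u: "u \<in> words k" "act u v = ?u0" "length u = d v ?u0" using geodesic_word[OF u0V] by blast
  have nbV: "nb s \<in> V" using adj_in_V[OF adj_nb[OF s]] by blast
  have "act (u @ [s]) v = act u (nb s)" using gen_v[OF s] by (simp add: act_append)
  also have "\<dots> = act (w @ [s]) (nb s)" using act_eq_if_eq_at_v[OF u(1) _ u(2) nbV] w(1) s by simp
  also have "\<dots> = act w v" using gen_nb[OF s] by (simp add: act_append)
  finally have "reduced_pair w (u @ [s])"
    using w u s L Lu unfolding reduced_pair_def reduced_def by simp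
  then have "w \<asymp> u @ [s]" by (rule reduced_pair_cox_eq)
  then have "w @ [s] \<asymp> u @ [s, s] @ []" using cox_eq_append_right[of cox_m k w "u @ [s]" "[s]"] s by simp
  also have "\<dots> \<asymp> u @ []" using cox_equiv_pair[OF u(1) words_Nil s] .
  finally have "w @ [s] \<asymp> u" by simp
  moreover have "reduced u" unfolding reduced_def using u by simp
  ultimately show ?thesis using u by blast
qed

lemma reduce_word: "w \<in> words k \<Longrightarrow> \<exists>w0. w0 \<in> words k \<and> reduced w0 \<and> act w0 v = act w v \<and> w \<asymp> w0"
proof (induction w rule: rev_induct)
  case Nil
  then show ?case using cox_equiv_refl dist_self v_in_V unfolding reduced_def by (intro exI[of _ "[]"]) simp
next
  case (snoc s w1)
  have sw: "s < k" "w1 \<in> words k" using snoc.prems by simp_all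
  obtain w1' where w1': "w1' \<in> words k" "reduced w1'" "act w1' v = act w1 v" "w1 \<asymp> w1'"
    using snoc.IH sw by blast
  have c1: "w1 @ [s] \<asymp> w1' @ [s]" using cox_eq_append_right[OF w1'(4) words_singleton[OF sw(1)]] .
  have ev1: "act (w1' @ [s]) v = act (w1 @ [s]) v"
    using act_eq_if_eq_at_v[OF w1'(1) sw(2) w1'(3)] gen_in_V sw v_in_V by (simp add: act_append)
  show ?case
  proof (cases "reduced (w1' @ [s])")
    case True
    then show ?thesis using c1 ev1 w1' sw by (intro exI[of _ "w1' @ [s]"]) simp
  next
    case False
    then show ?thesis using reduce_snoc[OF w1'(1,2) sw(1)] c1 ev1 cox_eq.trans by metis
  qed
qed

lemma cox_eq_if_act_eq: assumes "w \<in> words k" "w' \<in> words k" "act w v = act w' v" shows "w \<asymp> w'"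
proof -
  obtain w0 w0' where w0: "w0 \<in> words k" "reduced w0" "act w0 v = act w v" "w \<asymp> w0"
    and w0': "w0' \<in> words k" "reduced w0'" "act w0' v = act w' v" "w' \<asymp> w0'"
    using reduce_word assms by meson
  have "reduced_pair w0 w0'" using w0 w0' assms unfolding reduced_pair_def by simp
  then show ?thesis using reduced_pair_cox_eq w0(4) w0'(4) cox_eq.trans cox_eq.sym by meson
qed

section \<open>The presentation and the Cayley graph\<close>

lemma mirror_aut_elem: assumes e: "E x y" shows "\<exists>w. w \<in> words k \<and> mirror_aut V E x y = elem w"
proof -
  have xV: "x \<in> V" "y \<in> V" using adj_in_V e by blast+
  obtain u where u: "u \<in> words k" "act u v = x" using geodesic_word[OF xV(1)] by blast
  have "E (act (rev u) x) (act (rev u) y)" using aut_adj[OF act_aut[of "rev u"] e] u(1) by simp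
  moreover have "act (rev u) x = v" using act_rev_act[OF u(1) v_in_V] u(2) by simp
  ultimately obtain i where i: "i < k" "act (rev u) y = nb i" using nb_surj by metis
  then have "mirror_aut V E x y = mirror_aut V E (act u v) (act u (nb i))"
    using u(2) act_act_rev[OF u(1) xV(2)] by simp
  also have "\<dots> = elem (u @ [i] @ rev u)"
    using mirror_aut_extensional[of "act u v" "act u (nb i)"] aut_adj[OF act_aut[OF u(1)] adj_nb[OF i(1)]]
      mirror_aut_act[OF u(1) i(1)] unfolding elem_def by (intro extensionalityI[of _ V]) auto
  finally show ?thesis using u(1) i(1) by (intro exI[of _ "u @ [i] @ rev u"]) simp
qed

lemma inv_mirror_aut: assumes e: "E x y" shows "inv\<^bsub>BijGroup V\<^esub> (mirror_aut V E x y) = mirror_aut V E x y"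
proof -
  let ?h = "mirror_aut V E x y"
  have h: "?h \<in> carrier (BijGroup V)" using mirror_aut_Bij[OF e] by (simp add: BijGroup_def)
  have "compose V ?h ?h = (\<lambda>x\<in>V. x)"
    unfolding compose_def using mirror_aut_involution[OF e] by (intro restrict_ext) simp
  then have "?h \<otimes>\<^bsub>BijGroup V\<^esub> ?h = \<one>\<^bsub>BijGroup V\<^esub>" using h by (simp add: BijGroup_def)
  then show ?thesis using group.inv_equality[OF group_BijGroup _ h h] by blast
qed

lemma carrier_Mir_elem: "carrier Mir = elem ` words k"
proof
  show "elem ` words k \<subseteq> carrier Mir" using elem_carrier by blast
next
  show "carrier Mir \<subseteq> elem ` words k"
    unfolding carrier_Mir
  proof
    fix h assume "h \<in> generate (BijGroup V) (Bij V \<inter> mirror_auts V E)"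
    then show "h \<in> elem ` words k"
    proof (induction rule: generate.induct)
      case one
      have "\<one>\<^bsub>BijGroup V\<^esub> = elem []" unfolding elem_def by (simp add: BijGroup_def id_def)
      then show ?case by (metis imageI words_Nil)
    next
      case (incl h)
      then obtain x y where "E x y" "h = mirror_aut V E x y" unfolding mirror_auts_def by blast
      then show ?case using mirror_aut_elem by (metis image_eqI)
    next
      case (inv h)
      then obtain x y where "E x y" "h = mirror_aut V E x y" unfolding mirror_auts_def by blast
      then show ?case using mirror_aut_elem inv_mirror_aut by (metis image_eqI)
    next
      case (eng h1 h2)
      then obtain a b where ab: "a \<in> words k" "b \<in> words k" "h1 = elem a" "h2 = elem b" by blast
      have "h1 \<otimes>\<^bsub>BijGroup V\<^esub> h2 = elem a \<otimes>\<^bsub>Mir\<^esub> elem b"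
        using ab unfolding mirror_group_def by simp
      also have "\<dots> = elem (a @ b)" using elem_mult ab by simp
      finally show ?case using ab by simp
    qed
  qed
qed

definition to_Mir where "to_Mir U = the_elem (elem ` U)"

lemma to_Mir_class: assumes "w \<in> words k" shows "to_Mir (cox_rel cox_m k `` {w}) = elem w"
proof -
  have "elem u = elem w" if "w \<asymp> u" for u unfolding elem_eq_iff using act_eq_if_cox_eq[OF that] by simp
  then have "elem ` (cox_rel cox_m k `` {w}) = {elem w}"
    unfolding cox_rel_Image using cox_equiv_refl[OF assms] by blast
  then show ?thesis unfolding to_Mir_def by simp
qed

lemma presented_group_classE:
  assumes "U \<in> carrier (presented_group cox_m k)"
  obtains w where "w \<in> words k" "U = cox_rel cox_m k `` {w}"
  using assms unfolding carrier_presented_group by (auto elim!: quotientE)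

lemma to_Mir_hom: "to_Mir \<in> hom (presented_group cox_m k) Mir"
proof (rule homI)
  fix U assume "U \<in> carrier (presented_group cox_m k)"
  then show "to_Mir U \<in> carrier Mir"
    using to_Mir_class elem_carrier by (metis presented_group_classE)
next
  fix U W assume "U \<in> carrier (presented_group cox_m k)" "W \<in> carrier (presented_group cox_m k)"
  then obtain a b where "a \<in> words k" "U = cox_rel cox_m k `` {a}" "b \<in> words k" "W = cox_rel cox_m k `` {b}"
    by (metis presented_group_classE)
  then show "to_Mir (U \<otimes>\<^bsub>presented_group cox_m k\<^esub> W) = to_Mir U \<otimes>\<^bsub>Mir\<^esub> to_Mir W"
    using presented_group_mult_class to_Mir_class elem_mult by simp
qed

lemma to_Mir_inj: "inj_on to_Mir (carrier (presented_group cox_m k))"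
proof (rule inj_onI)
  fix U W assume "U \<in> carrier (presented_group cox_m k)" "W \<in> carrier (presented_group cox_m k)"
    and eq: "to_Mir U = to_Mir W"
  then obtain a b where ab: "a \<in> words k" "U = cox_rel cox_m k `` {a}" "b \<in> words k" "W = cox_rel cox_m k `` {b}"
    by (metis presented_group_classE)
  then have "act a v = act b v" using eq to_Mir_class elem_eq_iff v_in_V by simp
  then have "(a, b) \<in> cox_rel cox_m k" using cox_eq_if_act_eq ab unfolding cox_rel_def by blast
  then show "U = W" using ab eq_equiv_class_iff[OF cox_rel_equiv] by blast
qed

lemma to_Mir_surj: "to_Mir ` carrier (presented_group cox_m k) = carrier Mir"
proof
  show "to_Mir ` carrier (presented_group cox_m k) \<subseteq> carrier Mir"
    using to_Mir_hom unfolding hom_def by blast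
  show "carrier Mir \<subseteq> to_Mir ` carrier (presented_group cox_m k)"
  proof
    fix g assume "g \<in> carrier Mir"
    then obtain w where w: "w \<in> words k" "g = elem w" using carrier_Mir_elem by blast
    then have "cox_rel cox_m k `` {w} \<in> carrier (presented_group cox_m k)"
      unfolding carrier_presented_group by (auto intro: quotientI)
    then show "g \<in> to_Mir ` carrier (presented_group cox_m k)" using to_Mir_class w by force
  qed
qed

lemma to_Mir_iso: "to_Mir \<in> iso (presented_group cox_m k) Mir"
  unfolding iso_def bij_betw_def using to_Mir_hom to_Mir_inj to_Mir_surj by blast

lemma to_Mir_gen_class: "i < k \<Longrightarrow> to_Mir (gen_class cox_m k i) = gen i"
  using to_Mir_class[of "[i]"] elem_single unfolding gen_class_def by simp

lemma cox_m_ge_2: assumes "i < k" "j < k" "i \<noteq> j" shows "2 \<le> cox_m i j"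
proof -
  have "cox_m i j \<noteq> 1"
  proof
    assume "cox_m i j = 1"
    then have "gen i \<otimes>\<^bsub>Mir\<^esub> gen j = \<one>\<^bsub>Mir\<^esub>"
      using group.ord_eq_1[OF group_Mir gen_mult_carrier[OF assms(1,2)]] assms(3) unfolding cox_m_def by simp
    then have "elem [i, j] = elem []" using elem_mult[of "[i]" "[j]"] elem_single assms elem_Nil by simp
    then have "gen i (gen i (gen j v)) = gen i v" using elem_eq_iff v_in_V by fastforce
    moreover have nbV: "nb j \<in> V" using adj_in_V[OF adj_nb[OF assms(2)]] by blast
    ultimately have "nb j = nb i" using gen_gen[OF assms(1) nbV] gen_v assms by simp
    then show False using nb_inj assms by metis
  qed
  then show ?thesis using cox_m_pos assms by fastforce
qed

lemma act_eq_if_eq_at: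
  assumes "a \<in> words k" "b \<in> words k" "x \<in> V" "act a x = act b x" "y \<in> V" shows "act a y = act b y"
proof -
  obtain w where w: "w \<in> words k" "act w v = x" using geodesic_word[OF assms(3)] by blast
  have "act (a @ w) v = act (b @ w) v" using w assms by (simp add: act_append)
  moreover have "act (rev w) y \<in> V" using act_in_V w assms by simp
  ultimately have "act (a @ w) (act (rev w) y) = act (b @ w) (act (rev w) y)"
    using act_eq_if_eq_at_v[of "a @ w" "b @ w" "act (rev w) y"] w assms by simp
  then show ?thesis using act_act_rev[OF w(1) assms(5)] by (simp add: act_append)
qed

definition label where "label x = elem (rev (SOME w. w \<in> words k \<and> act w v = x))"

lemma label_props: assumes x: "x \<in> V" shows "label x \<in> carrier Mir" "label x x = v"
proof -
  have "\<exists>w. w \<in> words k \<and> act w v = x" using geodesic_word[OF x] by blast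
  then have w: "(SOME w. w \<in> words k \<and> act w v = x) \<in> words k" "act (SOME w. w \<in> words k \<and> act w v = x) v = x"
    using someI_ex[of "\<lambda>w. w \<in> words k \<and> act w v = x"] by blast+
  show "label x \<in> carrier Mir" unfolding label_def using elem_carrier w by simp
  show "label x x = v" unfolding label_def elem_def using act_rev_act[OF w(1) v_in_V] w(2) x by simp
qed

lemma label_unique: assumes x: "x \<in> V" and g: "g \<in> carrier Mir" "g x = v" shows "g = label x"
proof -
  obtain a where a: "a \<in> words k" "g = elem a" using g carrier_Mir_elem by blast
  obtain b where b: "b \<in> words k" "label x = elem b" using label_props[OF x] carrier_Mir_elem by blast
  have "act a x = act b x" using g(2) label_props(2)[OF x] a b x unfolding elem_def by simp
  then have "\<forall>y\<in>V. act a y = act b y" using act_eq_if_eq_at a b x by blast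
  then show ?thesis using a b elem_eq_iff by simp
qed

lemma Mir_aut: "g \<in> carrier Mir \<Longrightarrow> graph_aut V E g"
  using carrier_Mir_elem act_aut aut_cong unfolding elem_def by fastforce

lemma bij_label: "bij_betw label V (carrier Mir)"
  unfolding bij_betw_def
proof
  show "inj_on label V"
  proof (rule inj_onI)
    fix x y assume xy: "x \<in> V" "y \<in> V" "label x = label y"
    then have "label x x = label x y" using label_props by metis
    then show "x = y" using aut_inj[OF Mir_aut[OF label_props(1)[OF xy(1)]] xy(1,2)] by blast
  qed
  show "label ` V = carrier Mir"
  proof
    show "label ` V \<subseteq> carrier Mir" using label_props by blast
    show "carrier Mir \<subseteq> label ` V"
    proof
      fix g assume g: "g \<in> carrier Mir"
      then obtain a where a: "a \<in> words k" "g = elem a" using carrier_Mir_elem by blast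
      let ?x = "act (rev a) v"
      have xV: "?x \<in> V" using act_in_V a v_in_V by simp
      have "g ?x = v" using a act_act_rev xV v_in_V unfolding elem_def by simp
      then show "g \<in> label ` V" using label_unique[OF xV g] xV by blast
    qed
  qed
qed

lemma gen_mult_apply:
  assumes "i < k" "g \<in> carrier Mir" "x \<in> V"
  shows "gen i \<otimes>\<^bsub>Mir\<^esub> g \<in> carrier Mir" "(gen i \<otimes>\<^bsub>Mir\<^esub> g) x = gen i (g x)"
proof -
  show "gen i \<otimes>\<^bsub>Mir\<^esub> g \<in> carrier Mir"
    using monoid.m_closed[OF group.is_monoid[OF group_Mir] gen_carrier[OF assms(1)] assms(2)] .
  have "gen i \<in> Bij V" "g \<in> Bij V" using gen_carrier[OF assms(1)] assms(2) carrier_Mir_Bij by blast+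
  then show "(gen i \<otimes>\<^bsub>Mir\<^esub> g) x = gen i (g x)" using mult_Mir assms(3) by (simp add: compose_def)
qed

lemma adj_iff_cayley_adj_label:
  assumes x: "x \<in> V" and y: "y \<in> V"
  shows "E x y \<longleftrightarrow> cayley_adj Mir (gen ` {..<k}) (label x) (label y)"
proof -
  let ?g = "label y"
  have gc: "?g \<in> carrier Mir" and gy: "?g y = v" using label_props y by blast+
  have ga: "graph_aut V E ?g" using Mir_aut gc by blast
  show ?thesis
  proof
    assume e: "E x y"
    have "E v (?g x)" using aut_adj[OF ga adj_sym[OF e]] gy by simp
    then obtain i where i: "i < k" "?g x = nb i" using nb_surj by blast
    have "(gen i \<otimes>\<^bsub>Mir\<^esub> ?g) x = v" using gen_mult_apply[OF i(1) gc x] i gen_nb by simp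
    then have "gen i \<otimes>\<^bsub>Mir\<^esub> ?g = label x" using label_unique[OF x] gen_mult_apply[OF i(1) gc x] by blast
    then show "cayley_adj Mir (gen ` {..<k}) (label x) (label y)"
      unfolding cayley_adj_def using label_props x y i by force
  next
    assume "cayley_adj Mir (gen ` {..<k}) (label x) (label y)"
    then obtain i where i: "i < k" "label x = gen i \<otimes>\<^bsub>Mir\<^esub> ?g" unfolding cayley_adj_def by blast
    have "gen i (?g x) = v" using gen_mult_apply[OF i(1) gc x] i(2) label_props(2)[OF x] by simp
    then have "?g x = nb i" using gen_gen[OF i(1) aut_in_V[OF ga x]] gen_v[OF i(1)] by metis
    then have "E (?g y) (?g x)" using gy adj_nb[OF i(1)] by simp
    then show "E x y" using aut_adj_iff[OF ga y x] adj_sym by blast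
  qed
qed

end

theorem mainTheorem12:
  fixes V :: "'a set" and E :: "'a \<Rightarrow> 'a \<Rightarrow> bool"
    and v :: 'a and k :: nat and nb :: "nat \<Rightarrow> 'a"
  assumes "mirror_graph V E"
    and "v \<in> V"
    and "bij_betw nb {..<k} {u. E v u}"
  defines "A \<equiv> mirror_group V E"
    and "\<alpha> \<equiv> (\<lambda>i. mirror_aut V E v (nb i))"
    and "m \<equiv> (\<lambda>i j. if i = j then 1 else group.ord (mirror_group V E) (mirror_aut V E v (nb i) \<otimes>\<^bsub>mirror_group V E\<^esub> mirror_aut V E v (nb j)))"
  shows "(\<exists>\<phi>. \<phi> \<in> iso (presented_group m k) A \<and> (\<forall>i<k. \<phi> (gen_class m k i) = \<alpha> i))
       \<and> finite (carrier A)
       \<and> (\<forall>i<k. \<forall>j<k. i \<noteq> j \<longrightarrow> m i j \<ge> 2)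
       \<and> (\<exists>f. bij_betw f V (carrier A) \<and>
              (\<forall>x\<in>V. \<forall>y\<in>V. E x y \<longleftrightarrow> cayley_adj A (\<alpha> ` {..<k}) (f x) (f y)))"
proof -
  have "simple_graph V E" "connected_graph V E" using assms(1) unfolding mirror_graph_def by blast+
  then interpret M: rooted_mirror_graph V E v k nb
    using assms(1-3) by unfold_locales
  have "m = M.cox_m" unfolding m_def M.cox_m_def M.gen_def by (intro ext) simp
  moreover have "\<alpha> = M.gen" unfolding \<alpha>_def M.gen_def by (rule ext) simp
  ultimately show ?thesis
    unfolding A_def
    using M.to_Mir_iso M.to_Mir_gen_class M.finite_Mir M.cox_m_ge_2 M.bij_label M.adj_iff_cayley_adj_label
    by blast
qed

end
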